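(* Let $K\in\mathbb{N}$, $\alpha,\beta\in\Delta_K$ and $d\in\mathbb{R}_+^{K\times K}$, and let $(\alpha_n,\beta_n,d_n)\in\Delta_K\times\Delta_K\times\mathbb{R}_+^{K\times K}$ be measurable estimators. Suppose for a positive sequence $a_n\to\infty$ that $$a_n(\alpha_n-\alpha,\ \beta_n-\beta,\ d_n-d)\rightsquigarrow(\mathbb{G}^\alpha,\mathbb{G}^\beta,\mathbb{G}^d)\quad\text{in }\mathbb{R}^{2K+K^2},$$ with $(\mathbb{G}^\alpha,\mathbb{G}^\beta,\mathbb{G}^d)$ a tight (not necessarily Gaussian) random vector. Then $$a_n\big(W(\alpha_n,\beta_n,d_n)-W(\alpha,\beta,d)\big)\rightsquigarrow\inf_{\pi\in\Pi^\star_d(\alpha,\beta)}\langle\pi,\mathbb{G}^d\rangle+\sup_{f\in S_d(\alpha,\beta)}\langle f^{dd},\mathbb{G}^\alpha\rangle+\langle f^d,\mathbb{G}^\beta\rangle.$$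
   Context: $\Delta_K$ is the probability simplex in $\mathbb{R}^K$. $\Pi(\alpha,\beta)=\{\pi\in\mathbb{R}_+^{K\times K}:\sum_\ell\pi_{k\ell}=\alpha_k,\ \sum_k\pi_{k\ell}=\beta_\ell\}$ and $W(\alpha,\beta,d):=\min_{\pi\in\Pi(\alpha,\beta)}\sum_{k,\ell}\pi_{k\ell}d_{k\ell}$ (the sketched Wasserstein distance, with $d_{k\ell}$ a distance between mixture components $A_k,A_\ell$); $\Pi^\star_d(\alpha,\beta)$ is its set of minimizers and $\langle\pi,G\rangle=\sum_{k\ell}\pi_{k\ell}G_{k\ell}$. For $f\in\mathbb{R}^K$: $f^d_\ell=\min_kd_{k\ell}-f_k$ and $f^{dd}_k=\min_\ell d_{k\ell}-f^d_\ell$. $S_d(\alpha,\beta)$ is the set of maximizers of $\langle f^{dd},\alpha\rangle+\langle f^d,\beta\rangle$ over $f\in\mathbb{R}^K$ with $\|f\|_\infty\le2(2\max_{k,\ell}d_{k\ell}+1)$ (the maximum equals $W(\alpha,\beta,d)$). *)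

theory Defs
  imports "HOL-Probability.Probability"
begin

text \<open>Index set of mixture components: a finite type 'k, K = CARD('k).
  Vectors in R^K are real^'k, matrices in R^{K x K} are real^'k^'k.\<close>

definition prob_simplex :: "(real^'k::finite) set" where
  "prob_simplex = {x. (\<forall>k. 0 \<le> x$k) \<and> (\<Sum>k\<in>UNIV. x$k) = 1}"

definition couplings :: "real^'k::finite \<Rightarrow> real^'k \<Rightarrow> (real^'k^'k) set" where
  "couplings \<alpha> \<beta> = {\<pi>. (\<forall>k l. 0 \<le> \<pi>$k$l) \<and> (\<forall>k. (\<Sum>l\<in>UNIV. \<pi>$k$l) = \<alpha>$k)
                        \<and> (\<forall>l. (\<Sum>k\<in>UNIV. \<pi>$k$l) = \<beta>$l)}"

definition pairing :: "real^'k::finite^'k \<Rightarrow> real^'k^'k \<Rightarrow> real" where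
  "pairing \<pi> G = (\<Sum>k\<in>UNIV. \<Sum>l\<in>UNIV. \<pi>$k$l * G$k$l)"

definition SW :: "real^'k::finite \<Rightarrow> real^'k \<Rightarrow> real^'k^'k \<Rightarrow> real" where
  "SW \<alpha> \<beta> d = Inf ((\<lambda>\<pi>. pairing \<pi> d) ` couplings \<alpha> \<beta>)"

definition opt_couplings :: "real^'k::finite \<Rightarrow> real^'k \<Rightarrow> real^'k^'k \<Rightarrow> (real^'k^'k) set" where
  "opt_couplings \<alpha> \<beta> d = {\<pi> \<in> couplings \<alpha> \<beta>. pairing \<pi> d = SW \<alpha> \<beta> d}"

text \<open>d-transform f^d and double transform f^{dd}.\<close>
definition ctrans :: "real^'k::finite \<Rightarrow> real^'k^'k \<Rightarrow> real^'k" where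
  "ctrans f d = (\<chi> l. Min (range (\<lambda>k. d$k$l - f$k)))"

definition cctrans :: "real^'k::finite \<Rightarrow> real^'k^'k \<Rightarrow> real^'k" where
  "cctrans f d = (\<chi> k. Min (range (\<lambda>l. d$k$l - ctrans f d $ l)))"

definition dual_obj :: "real^'k::finite \<Rightarrow> real^'k \<Rightarrow> real^'k^'k \<Rightarrow> real^'k \<Rightarrow> real" where
  "dual_obj \<alpha> \<beta> d f = cctrans f d \<bullet> \<alpha> + ctrans f d \<bullet> \<beta>"

definition dual_box :: "real^'k::finite^'k \<Rightarrow> (real^'k) set" where
  "dual_box d = {f. \<forall>k. \<bar>f$k\<bar> \<le> 2 * (2 * Max {d$k'$l | k' l. True} + 1)}"

text \<open>S_d(alpha,beta): maximizers of the dual objective over the sup-norm box.\<close>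
definition dual_sols :: "real^'k::finite \<Rightarrow> real^'k \<Rightarrow> real^'k^'k \<Rightarrow> (real^'k) set" where
  "dual_sols \<alpha> \<beta> d = {f \<in> dual_box d. \<forall>g \<in> dual_box d. dual_obj \<alpha> \<beta> d g \<le> dual_obj \<alpha> \<beta> d f}"

definition weak_conv_rv ::
  "(nat \<Rightarrow> 'w measure) \<Rightarrow> (nat \<Rightarrow> 'w \<Rightarrow> 'a::metric_space) \<Rightarrow> 'v measure \<Rightarrow> ('v \<Rightarrow> 'a) \<Rightarrow> bool" where
  "weak_conv_rv M X N Y \<longleftrightarrow>
     (\<forall>h :: 'a \<Rightarrow> real. continuous_on UNIV h \<and> bounded (range h) \<longrightarrow>
        (\<lambda>n. \<integral>\<omega>. h (X n \<omega>) \<partial>M n) \<longlonglongrightarrow> (\<integral>\<omega>. h (Y \<omega>) \<partial>N))"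

end

(*
  By Kantorovich duality, SW is at once the least transport cost over couplings and the largest
  value of the dual objective (f^dd, f^d) over a bounded box of potentials.  Pairing an optimal
  coupling at one datum with a dual solution at another sandwiches SW(theta') - SW(theta) between
  two linear functionals of theta' - theta.  The sets of optimal couplings and of dual solutions
  are upper hemicontinuous in the datum, so the difference quotients a (SW(theta + x / a) - SW(theta))
  converge to D(x) = inf over optimal couplings of <pi, x_d> + sup over dual solutions of
  <f^dd, x_alpha> + <f^d, x_beta>, uniformly for x in bounded sets: SW is Hadamard directionally
  differentiable.  The functional delta method then follows from an extended continuous mapping
  theorem, where tightness of the limit confines a_n (theta_n - theta) to a large ball.
*)
theory Submission
  imports Defs
begin

lemma Min_range_le: "Min (range (a::'i::finite \<Rightarrow> 'b::linorder)) \<le> a i"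
  by (rule Min_le) auto

lemma Min_range_attained: "\<exists>i. Min (range (a::'i::finite \<Rightarrow> 'b::linorder)) = a i"
proof -
  have "Min (range a) \<in> range a" by (rule Min_in) auto
  then show ?thesis by (metis rangeE)
qed

lemma Min_range_greatest: "(\<And>i. c \<le> (a::'i::finite \<Rightarrow> 'b::linorder) i) \<Longrightarrow> c \<le> Min (range a)"
  by (metis Min_range_attained)

lemma Min_range_add_const:
  "Min (range (\<lambda>i. (a::'i::finite \<Rightarrow> 'b::linordered_ab_group_add) i + c)) = Min (range a) + c"
  by (metis (no_types, lifting) Min_range_attained Min_range_greatest Min_range_le add_le_cancel_right
      antisym)

lemma abs_Min_range_diff_le:
  fixes a b :: "'i::finite \<Rightarrow> 'b::{linordered_ab_group_add, ordered_ab_group_add_abs}"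
  assumes "\<And>i. \<bar>a i - b i\<bar> \<le> c"
  shows "\<bar>Min (range a) - Min (range b)\<bar> \<le> c"
proof -
  obtain i j where i: "Min (range a) = a i" and j: "Min (range b) = b j"
    using Min_range_attained by metis
  have "a i \<le> a j" "b j \<le> b i" using i j Min_range_le by metis+
  then have "a i - b j \<le> c" "b j - a i \<le> c"
    using assms[of j] assms[of i] by (auto simp: abs_le_iff intro: order_trans[OF diff_right_mono])
  then show ?thesis unfolding i j abs_le_iff by simp
qed

lemma abs_Inf_image_diff_le:
  fixes F G :: "'a \<Rightarrow> real"
  assumes "A \<noteq> {}" "bdd_below (F ` A)" "bdd_below (G ` A)" "\<And>a. a \<in> A \<Longrightarrow> \<bar>F a - G a\<bar> \<le> c"
  shows "\<bar>Inf (F ` A) - Inf (G ` A)\<bar> \<le> c"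
proof -
  have *: "Inf (H ` A) - c \<le> Inf (K ` A)"
    if "bdd_below (H ` A)" "\<And>a. a \<in> A \<Longrightarrow> H a - c \<le> K a" for H K :: "'a \<Rightarrow> real"
  proof (rule cInf_greatest)
    show "K ` A \<noteq> {}" using assms(1) by simp
    fix y assume "y \<in> K ` A"
    then obtain a where "a \<in> A" "y = K a" by blast
    moreover have "Inf (H ` A) \<le> H a" using \<open>a \<in> A\<close> that(1) by (intro cInf_lower) auto
    ultimately show "Inf (H ` A) - c \<le> y" using that(2) by fastforce
  qed
  have "Inf (G ` A) - c \<le> Inf (F ` A)" "Inf (F ` A) - c \<le> Inf (G ` A)"
    using assms(4) by (intro * assms(2,3); force simp: abs_le_iff)+
  then show ?thesis by (simp add: abs_le_iff)
qed

lemma abs_Sup_image_diff_le: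
  fixes F G :: "'a \<Rightarrow> real"
  assumes "A \<noteq> {}" "bdd_above (F ` A)" "bdd_above (G ` A)" "\<And>a. a \<in> A \<Longrightarrow> \<bar>F a - G a\<bar> \<le> c"
  shows "\<bar>Sup (F ` A) - Sup (G ` A)\<bar> \<le> c"
proof -
  have "\<bar>Inf ((\<lambda>a. - F a) ` A) - Inf ((\<lambda>a. - G a) ` A)\<bar> \<le> c"
  proof (rule abs_Inf_image_diff_le)
    show "bdd_below ((\<lambda>a. - F a) ` A)" "bdd_below ((\<lambda>a. - G a) ` A)"
      using bdd_below_uminus[of "F ` A"] bdd_below_uminus[of "G ` A"] assms(2,3)
      by (simp_all add: image_image)
  qed (use assms(1,4) in \<open>auto simp: abs_minus_commute\<close>)
  then show ?thesis by (simp add: Inf_real_def image_image abs_minus_commute)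
qed

lemma entry_le_norm: "\<bar>(z::real^'k::finite^'m::finite)$k$l\<bar> \<le> norm z"
  by (rule order_trans[OF component_le_norm_cart Finite_Cartesian_Product.norm_nth_le])

lemma norm_le_card_mult: "(\<And>i. \<bar>(x::real^'k::finite)$i\<bar> \<le> (c::real)) \<Longrightarrow> norm x \<le> real CARD('k) * c"
  using norm_le_l1_cart[of x] sum_mono[of UNIV "\<lambda>i. \<bar>x$i\<bar>" "\<lambda>_. c"] by simp

lemma norm_le_sum_norm_nth: "norm (x::'a::real_normed_vector^'k::finite) \<le> (\<Sum>i\<in>UNIV. norm (x$i))"
  unfolding norm_vec_def by (rule L2_set_le_sum) simp

lemma tendsto_if_dist_le_null:
  assumes "\<forall>\<^sub>F x in F. dist (g x) c \<le> b x" "(b \<longlongrightarrow> 0) F"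
  shows "(g \<longlongrightarrow> c) F"
  by (rule metric_tendsto_imp_tendsto[OF assms(2)])
    (use assms(1) in \<open>auto elim: eventually_mono intro: order_trans[OF _ abs_ge_self]\<close>)

lemma tendsto_add_scaleR_inverse_at_top:
  fixes x :: "'a \<Rightarrow> 'b::real_normed_vector"
  assumes "filterlim t at_top F" "(x \<longlongrightarrow> x0) F"
  shows "((\<lambda>j. c + x j /\<^sub>R t j) \<longlongrightarrow> c) F"
  using tendsto_add[OF tendsto_const tendsto_scaleR[OF tendsto_inverse_0_at_top[OF assms(1)] assms(2)]]
  by simp

lemma eventually_uniform_if_subseq_tendsto:
  fixes e :: "nat \<Rightarrow> 'a::{heine_borel, real_normed_vector} \<Rightarrow> real"
  assumes subseq: "\<And>r x x0. strict_mono r \<Longrightarrow> (\<And>j. x j \<in> S (r j)) \<Longrightarrow> x \<longlonglongrightarrow> x0 \<Longrightarrow>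
      \<exists>s. strict_mono s \<and> (\<lambda>j. e (r (s j)) (x (s j))) \<longlonglongrightarrow> 0"
    and "0 < \<epsilon>"
  shows "\<forall>\<^sub>F n in sequentially. \<forall>x\<in>S n. norm x \<le> R \<longrightarrow> \<bar>e n x\<bar> < \<epsilon>"
proof (rule ccontr)
  define bad where "bad = {n. \<exists>x\<in>S n. norm x \<le> R \<and> \<epsilon> \<le> \<bar>e n x\<bar>}"
  assume "\<not> ?thesis"
  then have "\<exists>\<^sub>F n in sequentially. n \<in> bad"
    by (simp add: bad_def not_eventually not_less)
  then have "infinite bad"
    unfolding frequently_sequentially infinite_nat_iff_unbounded_le .
  then obtain r :: "nat \<Rightarrow> nat" where r: "strict_mono r" "\<And>j. r j \<in> bad"
    using infinite_enumerate by blast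
  then have "\<forall>j. \<exists>x. x \<in> S (r j) \<and> norm x \<le> R \<and> \<epsilon> \<le> \<bar>e (r j) x\<bar>"
    by (auto simp: bad_def)
  then obtain x where x: "\<And>j. x j \<in> S (r j)" "\<And>j. norm (x j) \<le> R" "\<And>j. \<epsilon> \<le> \<bar>e (r j) (x j)\<bar>"
    by metis
  have "bounded (range x)" using x(2) by (auto simp: bounded_iff)
  then obtain x0 s1 where s1: "strict_mono s1" "(x \<circ> s1) \<longlonglongrightarrow> x0"
    using bounded_imp_convergent_subsequence by blast
  have "strict_mono (r \<circ> s1)" using r(1) s1(1) by (rule strict_mono_o)
  then obtain s2 where "(\<lambda>j. e (r (s1 (s2 j))) (x (s1 (s2 j)))) \<longlonglongrightarrow> 0"
    using subseq[of "r \<circ> s1" "x \<circ> s1" x0] x(1) s1(2) by auto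
  then have "\<forall>\<^sub>F j in sequentially. \<bar>e (r (s1 (s2 j))) (x (s1 (s2 j)))\<bar> < \<epsilon>"
    using \<open>0 < \<epsilon>\<close> by (auto dest: tendsto_norm[THEN order_tendstoD(2)])
  then show False
    using x(3) by (auto simp: eventually_sequentially not_less[symmetric])
qed

lemma prob_simplexD: "\<alpha> \<in> prob_simplex \<Longrightarrow> 0 \<le> \<alpha>$k" "\<alpha> \<in> prob_simplex \<Longrightarrow> (\<Sum>k\<in>UNIV. \<alpha>$k) = 1"
  by (auto simp: prob_simplex_def)

lemma pairing_eq_inner: "pairing \<pi> G = \<pi> \<bullet> G"
  by (simp add: pairing_def inner_vec_def)

lemma couplings_nonneg: "\<pi> \<in> couplings \<alpha> \<beta> \<Longrightarrow> 0 \<le> \<pi>$k$l"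
  by (simp add: couplings_def)

lemma inner_marginals_eq:
  assumes "\<pi> \<in> couplings \<alpha> \<beta>"
  shows "u \<bullet> \<alpha> + v \<bullet> \<beta> = (\<Sum>k\<in>UNIV. \<Sum>l\<in>UNIV. \<pi>$k$l * (u$k + v$l))"
proof -
  have \<alpha>: "\<alpha>$k = (\<Sum>l\<in>UNIV. \<pi>$k$l)" and \<beta>: "\<beta>$l = (\<Sum>k\<in>UNIV. \<pi>$k$l)" for k l
    using assms by (simp_all add: couplings_def)
  have "v \<bullet> \<beta> = (\<Sum>l\<in>UNIV. \<Sum>k\<in>UNIV. \<pi>$k$l * v$l)"
    by (simp add: inner_vec_def \<beta> sum_distrib_left mult.commute)
  also have "\<dots> = (\<Sum>k\<in>UNIV. \<Sum>l\<in>UNIV. \<pi>$k$l * v$l)"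
    by (rule sum.swap)
  finally have "v \<bullet> \<beta> = \<dots>" .
  moreover have "u \<bullet> \<alpha> = (\<Sum>k\<in>UNIV. \<Sum>l\<in>UNIV. \<pi>$k$l * u$k)"
    by (simp add: inner_vec_def \<alpha> sum_distrib_left mult.commute)
  ultimately show ?thesis by (simp add: distrib_left sum.distrib)
qed

lemma product_coupling:
  assumes "\<alpha> \<in> prob_simplex" "\<beta> \<in> prob_simplex"
  shows "(\<chi> k l. \<alpha>$k * \<beta>$l) \<in> couplings \<alpha> \<beta>"
proof -
  have "(\<Sum>l\<in>UNIV. \<alpha>$k * \<beta>$l) = \<alpha>$k" for k
    using prob_simplexD(2)[OF assms(2)] by (simp flip: sum_distrib_left)
  moreover have "(\<Sum>k\<in>UNIV. \<alpha>$k * \<beta>$l) = \<beta>$l" for l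
    using prob_simplexD(2)[OF assms(1)] by (simp flip: sum_distrib_right)
  ultimately show ?thesis
    using assms by (simp add: couplings_def prob_simplexD)
qed

lemma couplings_nonempty: "\<alpha> \<in> prob_simplex \<Longrightarrow> \<beta> \<in> prob_simplex \<Longrightarrow> couplings \<alpha> \<beta> \<noteq> {}"
  using product_coupling by blast

lemma coupling_total_mass:
  "\<pi> \<in> couplings \<alpha> \<beta> \<Longrightarrow> \<alpha> \<in> prob_simplex \<Longrightarrow> (\<Sum>k\<in>UNIV. \<Sum>l\<in>UNIV. \<pi>$k$l) = 1"
  by (simp add: couplings_def prob_simplex_def)

lemma abs_pairing_le_norm:
  assumes "\<pi> \<in> couplings \<alpha> \<beta>" "\<alpha> \<in> prob_simplex"
  shows "\<bar>pairing \<pi> z\<bar> \<le> norm z"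
proof -
  have "\<bar>pairing \<pi> z\<bar> \<le> (\<Sum>k\<in>UNIV. \<Sum>l\<in>UNIV. \<bar>\<pi>$k$l * z$k$l\<bar>)"
    unfolding pairing_def by (rule order_trans[OF sum_abs sum_mono[OF sum_abs]])
  also have "\<dots> \<le> (\<Sum>k\<in>UNIV. \<Sum>l\<in>UNIV. \<pi>$k$l * norm z)"
    using assms(1) by (intro sum_mono) (simp add: abs_mult couplings_nonneg entry_le_norm mult_left_mono)
  also have "\<dots> = norm z"
    using coupling_total_mass[OF assms] by (simp flip: sum_distrib_right)
  finally show ?thesis .
qed

lemma norm_coupling_le_1:
  assumes "\<pi> \<in> couplings \<alpha> \<beta>" "\<alpha> \<in> prob_simplex"
  shows "norm \<pi> \<le> 1"
proof -
  have "norm \<pi> \<le> (\<Sum>k\<in>UNIV. \<Sum>l\<in>UNIV. \<bar>\<pi>$k$l\<bar>)"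
    by (rule order_trans[OF norm_le_sum_norm_nth sum_mono[OF norm_le_l1_cart]])
  also have "\<dots> = 1"
    using assms by (simp add: couplings_nonneg coupling_total_mass)
  finally show ?thesis .
qed

lemma closed_couplings_graph: "closed {(\<alpha>, \<beta>, \<pi>). \<pi> \<in> couplings \<alpha> \<beta>}"
  unfolding couplings_def mem_Collect_eq case_prod_unfold
  by (intro closed_Collect_conj closed_Collect_all closed_Collect_le closed_Collect_eq continuous_intros)

lemma compact_couplings:
  assumes "\<alpha> \<in> prob_simplex"
  shows "compact (couplings \<alpha> \<beta>)"
  unfolding compact_eq_bounded_closed
proof
  show "bounded (couplings \<alpha> \<beta>)"
    using norm_coupling_le_1[OF _ assms] by (auto simp: bounded_iff)
  show "closed (couplings \<alpha> \<beta>)"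
    unfolding couplings_def
    by (intro closed_Collect_conj closed_Collect_all closed_Collect_le closed_Collect_eq continuous_intros)
qed

definition max_entry :: "real^'k::finite^'m::finite \<Rightarrow> real" where
  "max_entry d = Max {d$k$l | k l. True}"

abbreviation dual_radius :: "real^'k::finite^'k \<Rightarrow> real" where
  "dual_radius d \<equiv> 2 * (2 * max_entry d + 1)"

lemma entries_eq_image: "{d$k$l | k l. True} = (\<lambda>(k, l). d$k$l) ` UNIV"
  by auto

lemma max_entry_ge: "d$k$l \<le> max_entry d"
  unfolding max_entry_def entries_eq_image by (rule Max_ge) auto

lemma max_entry_attained: "\<exists>k l. max_entry d = d$k$l"
proof -
  have "max_entry d \<in> (\<lambda>(k, l). d$k$l) ` UNIV"
    unfolding max_entry_def entries_eq_image by (rule Max_in) auto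
  then show ?thesis by auto
qed

lemma max_entry_nonneg: "\<forall>k l. 0 \<le> d$k$l \<Longrightarrow> 0 \<le> max_entry d"
  by (meson max_entry_ge order_trans)

lemma abs_max_entry_diff_le: "\<bar>max_entry d - max_entry e\<bar> \<le> norm (d - e)"
proof -
  obtain k l k' l' where "max_entry d = d$k$l" "max_entry e = e$k'$l'"
    using max_entry_attained by metis
  moreover have "\<bar>(d - e)$k$l\<bar> \<le> norm (d - e)" "\<bar>(d - e)$k'$l'\<bar> \<le> norm (d - e)"
    by (rule entry_le_norm)+
  ultimately show ?thesis
    using max_entry_ge[of d k' l'] max_entry_ge[of e k l] by (simp add: abs_le_iff)
qed

lemma tendsto_max_entry [tendsto_intros]:
  "(D \<longlongrightarrow> d) F \<Longrightarrow> ((\<lambda>x. max_entry (D x)) \<longlongrightarrow> max_entry d) F"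
  by (rule tendsto_if_dist_le_null[where b = "\<lambda>x. norm (D x - d)"])
    (auto simp: dist_real_def abs_max_entry_diff_le intro: always_eventually tendsto_norm_zero LIM_zero)

lemma dual_box_eq: "dual_box d = {f. \<forall>k. \<bar>f$k\<bar> \<le> dual_radius d}"
  by (simp add: dual_box_def max_entry_def)

lemma norm_le_if_dual_box: "f \<in> dual_box d \<Longrightarrow> norm f \<le> CARD('k) * dual_radius d"
  for f :: "real^'k::finite"
  using norm_le_card_mult[of f "dual_radius d"] by (simp add: dual_box_eq)

lemma compact_dual_box: "compact (dual_box d)"
  unfolding compact_eq_bounded_closed
proof
  show "bounded (dual_box d)"
    using norm_le_if_dual_box by (auto simp: bounded_iff)
  show "closed (dual_box d)"
    unfolding dual_box_def by (intro closed_Collect_all closed_Collect_le continuous_intros)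
qed

lemma zero_in_dual_box: "\<forall>k l. 0 \<le> d$k$l \<Longrightarrow> 0 \<in> dual_box d"
  using max_entry_nonneg[of d] by (simp add: dual_box_eq)

lemma ctrans_nth: "ctrans f d $ l = Min (range (\<lambda>k. d$k$l - f$k))"
  by (simp add: ctrans_def)

lemma cctrans_nth: "cctrans f d $ k = Min (range (\<lambda>l. d$k$l - ctrans f d $ l))"
  by (simp add: cctrans_def)

lemma ctrans_le: "ctrans f d $ l \<le> d$k$l - f$k"
  unfolding ctrans_nth by (rule Min_range_le)

lemma cctrans_le: "cctrans f d $ k \<le> d$k$l - ctrans f d $ l"
  unfolding cctrans_nth by (rule Min_range_le)

lemma cctrans_add_ctrans_le: "cctrans f d $ k + ctrans f d $ l \<le> d$k$l"
  using cctrans_le[of f d k l] by simp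

lemma le_ctrans: "(\<And>k. u$k + v$l \<le> d$k$l) \<Longrightarrow> v$l \<le> ctrans u d $ l"
  unfolding ctrans_nth by (rule Min_range_greatest) (simp add: le_diff_eq add.commute)

lemma le_cctrans: "f$k \<le> cctrans f d $ k"
  unfolding cctrans_nth
proof (rule Min_range_greatest)
  show "f$k \<le> d$k$l - ctrans f d $ l" for l
    using ctrans_le[of f d l k] by simp
qed

lemma ctrans_cctrans: "ctrans (cctrans f d) d = ctrans f d"
  unfolding vec_eq_iff
proof (intro allI antisym)
  fix l
  show "ctrans (cctrans f d) d $ l \<le> ctrans f d $ l"
    unfolding ctrans_nth[of f]
    by (rule Min_range_greatest) (meson ctrans_le diff_left_mono le_cctrans order_trans)
  show "ctrans f d $ l \<le> ctrans (cctrans f d) d $ l"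
    by (rule le_ctrans) (rule cctrans_add_ctrans_le)
qed

lemma cctrans_cctrans: "cctrans (cctrans f d) d = cctrans f d"
  unfolding cctrans_def[of "cctrans f d"] ctrans_cctrans by (simp add: cctrans_def)

lemma cctrans_oscillation:
  assumes "\<forall>k l. 0 \<le> d$k$l"
  shows "cctrans f d $ k - cctrans f d $ k' \<le> max_entry d"
proof -
  obtain l where l: "cctrans f d $ k' = d$k'$l - ctrans f d $ l"
    using Min_range_attained[of "\<lambda>l. d$k'$l - ctrans f d $ l"] unfolding cctrans_nth by blast
  have "cctrans f d $ k \<le> d$k$l - ctrans f d $ l" by (rule cctrans_le)
  with l max_entry_ge[of d k l] assms[rule_format, of k' l] show ?thesis by linarith
qed

lemma ctrans_diff_vec: "ctrans (f - vec c) d = ctrans f d + vec c"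
  unfolding vec_eq_iff
proof
  fix l
  have "ctrans (f - vec c) d $ l = Min (range (\<lambda>k. (d$k$l - f$k) + c))"
    unfolding ctrans_nth by (simp add: algebra_simps)
  then show "ctrans (f - vec c) d $ l = (ctrans f d + vec c) $ l"
    by (simp add: ctrans_nth Min_range_add_const)
qed

lemma cctrans_diff_vec: "cctrans (f - vec c) d = cctrans f d - vec c"
  unfolding vec_eq_iff
proof
  fix k
  have "cctrans (f - vec c) d $ k = Min (range (\<lambda>l. (d$k$l - ctrans f d $ l) + - c))"
    unfolding cctrans_nth by (simp add: ctrans_diff_vec algebra_simps)
  then show "cctrans (f - vec c) d $ k = (cctrans f d - vec c) $ k"
    unfolding Min_range_add_const by (simp add: cctrans_nth)
qed

lemma abs_ctrans_diff_le: "\<bar>ctrans f d $ l - ctrans g e $ l\<bar> \<le> norm (f - g) + norm (d - e)"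
  unfolding ctrans_nth
proof (rule abs_Min_range_diff_le)
  fix k
  have "\<bar>(d - e)$k$l\<bar> \<le> norm (d - e)" "\<bar>(f - g)$k\<bar> \<le> norm (f - g)"
    by (rule entry_le_norm, rule component_le_norm_cart)
  then show "\<bar>d$k$l - f$k - (e$k$l - g$k)\<bar> \<le> norm (f - g) + norm (d - e)"
    by simp
qed

lemma abs_cctrans_diff_le: "\<bar>cctrans f d $ k - cctrans g e $ k\<bar> \<le> 2 * (norm (f - g) + norm (d - e))"
  unfolding cctrans_nth
proof (rule abs_Min_range_diff_le)
  fix l
  have "\<bar>d$k$l - e$k$l\<bar> \<le> norm (d - e)" using entry_le_norm[of "d - e" k l] by simp
  then show "\<bar>d$k$l - ctrans f d $ l - (e$k$l - ctrans g e $ l)\<bar> \<le> 2 * (norm (f - g) + norm (d - e))"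
    using abs_ctrans_diff_le[of f d l g e] norm_ge_zero[of "f - g"] by (smt (verit))
qed

lemma norm_ctrans_diff_le:
  "norm (ctrans f d - ctrans g e) \<le> CARD('k) * (norm (f - g) + norm (d - e))"
  for f :: "real^'k::finite"
  by (rule norm_le_card_mult) (use abs_ctrans_diff_le[of f d _ g e] in simp)

lemma norm_cctrans_diff_le:
  "norm (cctrans f d - cctrans g e) \<le> CARD('k) * (2 * (norm (f - g) + norm (d - e)))"
  for f :: "real^'k::finite"
  by (rule norm_le_card_mult) (use abs_cctrans_diff_le[of f d _ g e] in simp)

lemma ctrans_zero: "ctrans 0 0 = 0"
  by (simp add: ctrans_def vec_eq_iff)

lemma cctrans_zero: "cctrans 0 0 = 0"
  by (simp add: cctrans_def ctrans_zero vec_eq_iff)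

lemma tendsto_ctrans [tendsto_intros]:
  fixes F :: "'a \<Rightarrow> real^'k::finite"
  assumes "(F \<longlongrightarrow> f) net" "(D \<longlongrightarrow> d) net"
  shows "((\<lambda>x. ctrans (F x) (D x)) \<longlongrightarrow> ctrans f d) net"
proof (rule tendsto_if_dist_le_null)
  show "\<forall>\<^sub>F x in net. dist (ctrans (F x) (D x)) (ctrans f d) \<le> CARD('k) * (norm (F x - f) + norm (D x - d))"
    by (simp add: dist_norm norm_ctrans_diff_le)
  show "((\<lambda>x. CARD('k) * (norm (F x - f) + norm (D x - d))) \<longlongrightarrow> 0) net"
    using assms by (intro tendsto_mult_right_zero tendsto_add_zero tendsto_norm_zero LIM_zero)
qed

lemma tendsto_cctrans [tendsto_intros]:
  fixes F :: "'a \<Rightarrow> real^'k::finite"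
  assumes "(F \<longlongrightarrow> f) net" "(D \<longlongrightarrow> d) net"
  shows "((\<lambda>x. cctrans (F x) (D x)) \<longlongrightarrow> cctrans f d) net"
proof (rule tendsto_if_dist_le_null)
  show "\<forall>\<^sub>F x in net. dist (cctrans (F x) (D x)) (cctrans f d) \<le> CARD('k) * (2 * (norm (F x - f) + norm (D x - d)))"
    unfolding dist_norm by (intro always_eventually allI norm_cctrans_diff_le)
  show "((\<lambda>x. CARD('k) * (2 * (norm (F x - f) + norm (D x - d)))) \<longlongrightarrow> 0) net"
    using assms by (intro tendsto_mult_right_zero tendsto_add_zero tendsto_norm_zero LIM_zero)
qed

definition transform_bound :: "real^'k::finite^'k \<Rightarrow> real" where
  "transform_bound d = CARD('k) * (2 * (CARD('k) * dual_radius d + norm d))"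

lemma
  fixes f :: "real^'k::finite"
  assumes "f \<in> dual_box d"
  shows norm_ctrans_le_transform_bound: "norm (ctrans f d) \<le> transform_bound d"
    and norm_cctrans_le_transform_bound: "norm (cctrans f d) \<le> transform_bound d"
proof -
  have "norm (ctrans f d) \<le> CARD('k) * (norm f + norm d)"
    using norm_ctrans_diff_le[of f d 0 0] by (simp add: ctrans_zero)
  also have "\<dots> \<le> CARD('k) * (2 * (norm f + norm d))"
    by (intro mult_left_mono) auto
  finally have "norm (ctrans f d) \<le> CARD('k) * (2 * (norm f + norm d))" .
  moreover have "norm (cctrans f d) \<le> CARD('k) * (2 * (norm f + norm d))"
    using norm_cctrans_diff_le[of f d 0 0] by (simp add: cctrans_zero)
  moreover have "CARD('k) * (2 * (norm f + norm d)) \<le> transform_bound d"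
    unfolding transform_bound_def using norm_le_if_dual_box[OF assms] by simp
  ultimately show "norm (ctrans f d) \<le> transform_bound d" "norm (cctrans f d) \<le> transform_bound d"
    by linarith+
qed

lemma inner_vec_simplex: "\<alpha> \<in> prob_simplex \<Longrightarrow> vec c \<bullet> \<alpha> = c"
  by (simp add: inner_vec_def prob_simplex_def flip: sum_distrib_left)

lemma dual_obj_diff_vec:
  assumes "\<alpha> \<in> prob_simplex" "\<beta> \<in> prob_simplex"
  shows "dual_obj \<alpha> \<beta> d (f - vec c) = dual_obj \<alpha> \<beta> d f"
  using assms by (simp add: dual_obj_def ctrans_diff_vec cctrans_diff_vec inner_diff_left
      inner_add_left inner_vec_simplex)

lemma continuous_on_dual_obj: "continuous_on S (dual_obj \<alpha> \<beta> d)"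
  unfolding continuous_on_def dual_obj_def by (intro ballI tendsto_intros tendsto_ident_at)

section \<open>Kantorovich duality\<close>

lemma weak_duality:
  assumes "\<pi> \<in> couplings \<alpha> \<beta>" "\<And>k l. u$k + v$l \<le> d$k$l"
  shows "u \<bullet> \<alpha> + v \<bullet> \<beta> \<le> pairing \<pi> d"
  unfolding inner_marginals_eq[OF assms(1)] pairing_def
  by (intro sum_mono mult_left_mono assms(2) couplings_nonneg[OF assms(1)])

lemma dual_obj_le_pairing: "\<pi> \<in> couplings \<alpha> \<beta> \<Longrightarrow> dual_obj \<alpha> \<beta> d f \<le> pairing \<pi> d"
  unfolding dual_obj_def by (rule weak_duality[OF _ cctrans_add_ctrans_le])

lemma bdd_below_transport_costs: "bdd_below ((\<lambda>\<pi>. pairing \<pi> d) ` couplings \<alpha> \<beta>)"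
  by (rule bdd_belowI2[where m = "dual_obj \<alpha> \<beta> d 0"]) (rule dual_obj_le_pairing)

lemma SW_le_pairing: "\<pi> \<in> couplings \<alpha> \<beta> \<Longrightarrow> SW \<alpha> \<beta> d \<le> pairing \<pi> d"
  unfolding SW_def by (rule cInf_lower[OF imageI bdd_below_transport_costs])

lemma dual_obj_le_SW:
  assumes "\<alpha> \<in> prob_simplex" "\<beta> \<in> prob_simplex"
  shows "dual_obj \<alpha> \<beta> d f \<le> SW \<alpha> \<beta> d"
  unfolding SW_def using couplings_nonempty[OF assms] dual_obj_le_pairing
  by (blast intro: cInf_greatest)

lemma opt_couplings_nonempty:
  assumes "\<alpha> \<in> prob_simplex" "\<beta> \<in> prob_simplex"
  shows "opt_couplings \<alpha> \<beta> d \<noteq> {}"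
proof -
  have "continuous_on (couplings \<alpha> \<beta>) (\<lambda>\<pi>. pairing \<pi> d)"
    unfolding pairing_eq_inner by (intro continuous_intros)
  then obtain \<pi> where \<pi>: "\<pi> \<in> couplings \<alpha> \<beta>" "\<And>\<pi>'. \<pi>' \<in> couplings \<alpha> \<beta> \<Longrightarrow> pairing \<pi> d \<le> pairing \<pi>' d"
    using continuous_attains_inf[OF compact_couplings[OF assms(1)] couplings_nonempty[OF assms]] by blast
  then have "pairing \<pi> d \<le> SW \<alpha> \<beta> d"
    unfolding SW_def by (blast intro: cInf_greatest)
  with \<pi> SW_le_pairing[of \<pi>] show ?thesis
    unfolding opt_couplings_def by (blast intro: antisym)
qed

lemma dual_sols_nonempty:
  assumes "\<forall>k l. 0 \<le> d$k$l"
  shows "dual_sols \<alpha> \<beta> d \<noteq> {}"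
proof -
  obtain f where "f \<in> dual_box d" "\<And>g. g \<in> dual_box d \<Longrightarrow> dual_obj \<alpha> \<beta> d g \<le> dual_obj \<alpha> \<beta> d f"
    using continuous_attains_sup[OF compact_dual_box _ continuous_on_dual_obj] zero_in_dual_box[OF assms]
    by blast
  then show ?thesis unfolding dual_sols_def by blast
qed

text \<open>The double transform of u dominates (u, v); shifted to vanish at one index it keeps its dual
  value and, by the oscillation bound, lies in the dual box.\<close>
lemma dual_box_dominates_feasible_pair:
  fixes u v :: "real^'k::finite"
  assumes \<alpha>: "\<alpha> \<in> prob_simplex" and \<beta>: "\<beta> \<in> prob_simplex" and d: "\<forall>k l. 0 \<le> d$k$l"
    and uv: "\<And>k l. u$k + v$l \<le> d$k$l"
  obtains f where "f \<in> dual_box d" "u \<bullet> \<alpha> + v \<bullet> \<beta> \<le> dual_obj \<alpha> \<beta> d f"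
proof
  define w where "w = cctrans u d"
  define k0 :: 'k where "k0 = undefined"
  show "w - vec (w$k0) \<in> dual_box d"
  proof -
    have "\<bar>w$k - w$k0\<bar> \<le> dual_radius d" for k
      using cctrans_oscillation[OF d, of u k k0] cctrans_oscillation[OF d, of u k0 k]
        max_entry_nonneg[OF d] unfolding w_def by (smt (verit))
    then show ?thesis by (simp add: dual_box_eq)
  qed
  have "u \<bullet> \<alpha> \<le> w \<bullet> \<alpha>"
    unfolding w_def inner_vec_def inner_real_def using \<alpha> by (intro sum_mono mult_right_mono le_cctrans prob_simplexD(1)) simp_all
  moreover have "v \<bullet> \<beta> \<le> ctrans u d \<bullet> \<beta>"
    unfolding inner_vec_def inner_real_def using \<beta> uv by (intro sum_mono mult_right_mono le_ctrans prob_simplexD(1)) simp_all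
  moreover have "dual_obj \<alpha> \<beta> d (w - vec (w$k0)) = w \<bullet> \<alpha> + ctrans u d \<bullet> \<beta>"
    using dual_obj_diff_vec[OF \<alpha> \<beta>, of d w "w$k0"]
    by (simp add: dual_obj_def w_def cctrans_cctrans ctrans_cctrans)
  ultimately show "u \<bullet> \<alpha> + v \<bullet> \<beta> \<le> dual_obj \<alpha> \<beta> d (w - vec (w$k0))"
    by simp
qed

lemma farkas_finite_cone:
  fixes p :: "'a::euclidean_space"
  assumes "finite G" "p \<notin> convex_cone hull G"
  obtains a where "a \<bullet> p < 0" "\<And>g. g \<in> G \<Longrightarrow> 0 \<le> a \<bullet> g"
proof -
  obtain a b where ab: "a \<bullet> p < b" "\<And>x. x \<in> convex_cone hull G \<Longrightarrow> b < a \<bullet> x"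
    using separating_hyperplane_closed_point[OF convex_convex_cone_hull closed_convex_cone_hull[OF assms(1)]
        assms(2)] by blast
  have "b < 0" using ab(2)[OF convex_cone_hull_contains_0] by simp
  have "0 \<le> a \<bullet> g" if "g \<in> G" for g
  proof (rule ccontr)
    assume "\<not> 0 \<le> a \<bullet> g"
    then have "(b / (a \<bullet> g)) *\<^sub>R g \<in> convex_cone hull G"
      using \<open>b < 0\<close> that by (intro convex_cone_hull_mul hull_inc) (auto simp: divide_nonpos_neg less_imp_le)
    from ab(2)[OF this] \<open>\<not> 0 \<le> a \<bullet> g\<close> show False by simp
  qed
  with ab(1) \<open>b < 0\<close> show ?thesis using that by force
qed

text \<open>The point ((\<alpha>, \<beta>), SW - \<epsilon>) lies outside the cone generated by the images ((e_k, e_l), d_kl)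
  of the unit transport plans and by ((0, 0), 1), so Farkas' lemma separates it from that cone.\<close>
lemma transport_cone_separation:
  fixes \<alpha> \<beta> :: "real^'k::finite" and d :: "real^'k^'k"
  assumes "0 < \<epsilon>"
  obtains u v c where "\<And>k l. 0 \<le> u$k + v$l + c * d$k$l" "0 \<le> c"
    "u \<bullet> \<alpha> + v \<bullet> \<beta> + c * (SW \<alpha> \<beta> d - \<epsilon>) < 0"
proof -
  define L :: "(real^'k^'k) \<times> real \<Rightarrow> ((real^'k) \<times> (real^'k)) \<times> real" where
    "L = (\<lambda>(\<pi>, s). (((\<chi> k. \<Sum>l\<in>UNIV. \<pi>$k$l), (\<chi> l. \<Sum>k\<in>UNIV. \<pi>$k$l)), \<pi> \<bullet> d + s))"
  define E :: "((real^'k^'k) \<times> real) set"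
    where "E = (\<lambda>(k, l). (axis k (axis l 1), 0)) ` UNIV \<union> {(0, 1)}"
  define P :: "((real^'k^'k) \<times> real) set" where "P = {(\<pi>, s). (\<forall>k l. 0 \<le> \<pi>$k$l) \<and> 0 \<le> s}"
  define p where "p = ((\<alpha>, \<beta>), SW \<alpha> \<beta> d - \<epsilon>)"
  have "linear L"
    by (rule linearI) (auto simp: L_def vec_eq_iff sum.distrib sum_distrib_left inner_add_left algebra_simps)
  have "convex_cone hull E \<subseteq> P"
    by (rule hull_minimal) (auto simp: E_def P_def axis_def convex_cone_iff zero_prod_def)
  moreover have "p \<notin> L ` P"
  proof
    assume "p \<in> L ` P"
    then obtain \<pi> s where "(\<pi>, s) \<in> P" "L (\<pi>, s) = p" by auto
    then have "\<pi> \<in> couplings \<alpha> \<beta>" "SW \<alpha> \<beta> d - \<epsilon> = pairing \<pi> d + s" "0 \<le> s"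
      by (auto simp: p_def L_def P_def couplings_def pairing_eq_inner vec_eq_iff)
    with SW_le_pairing[of \<pi> \<alpha> \<beta> d] \<open>0 < \<epsilon>\<close> show False by linarith
  qed
  ultimately have "p \<notin> convex_cone hull (L ` E)"
    by (auto simp: convex_cone_hull_linear_image[OF \<open>linear L\<close>])
  moreover have "finite (L ` E)" by (simp add: E_def)
  ultimately obtain a where a: "a \<bullet> p < 0" "\<And>g. g \<in> L ` E \<Longrightarrow> 0 \<le> a \<bullet> g"
    using farkas_finite_cone by blast
  obtain u v c where a_eq: "a = ((u, v), c)" by (metis prod.exhaust)
  show ?thesis
  proof
    fix k l
    have "L (axis k (axis l 1), 0) = ((axis k 1, axis l 1), d$k$l)"
      unfolding L_def
      by (simp add: inner_axis') (simp add: vec_eq_iff axis_def if_distrib[of "\<lambda>v. v $ _"] cong: if_cong)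
    moreover have "(axis k (axis l 1), 0) \<in> E"
      unfolding E_def by (rule UnI1, rule rev_image_eqI[of "(k, l)"]) auto
    ultimately show "0 \<le> u$k + v$l + c * d$k$l"
      using a(2)[OF imageI] by (fastforce simp: a_eq inner_axis)
  next
    show "0 \<le> c" using a(2)[of "L (0, 1)"] by (simp add: E_def L_def a_eq flip: zero_vec_def)
    show "u \<bullet> \<alpha> + v \<bullet> \<beta> + c * (SW \<alpha> \<beta> d - \<epsilon>) < 0"
      using a(1) by (simp add: a_eq p_def)
  qed
qed

lemma near_optimal_dual_pair:
  fixes \<alpha> \<beta> :: "real^'k::finite" and d :: "real^'k^'k"
  assumes \<alpha>: "\<alpha> \<in> prob_simplex" and \<beta>: "\<beta> \<in> prob_simplex" and "0 < \<epsilon>"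
  obtains u v where "\<And>k l. u$k + v$l \<le> d$k$l" "SW \<alpha> \<beta> d - \<epsilon> < u \<bullet> \<alpha> + v \<bullet> \<beta>"
proof -
  obtain u v c where uvc: "\<And>k l. 0 \<le> u$k + v$l + c * d$k$l" "0 \<le> c"
    and separation: "u \<bullet> \<alpha> + v \<bullet> \<beta> + c * (SW \<alpha> \<beta> d - \<epsilon>) < 0"
    using transport_cone_separation[OF \<open>0 < \<epsilon>\<close>] by blast
  define \<pi> where "\<pi> = (\<chi> k l. \<alpha>$k * \<beta>$l)"
  have \<pi>: "\<pi> \<in> couplings \<alpha> \<beta>" unfolding \<pi>_def by (rule product_coupling[OF \<alpha> \<beta>])
  have "u \<bullet> \<alpha> + v \<bullet> \<beta> + c * pairing \<pi> d = (\<Sum>k\<in>UNIV. \<Sum>l\<in>UNIV. \<pi>$k$l * (u$k + v$l + c * d$k$l))"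
    by (simp add: inner_marginals_eq[OF \<pi>] pairing_def sum_distrib_left distrib_left sum.distrib
        mult.left_commute)
  also have "\<dots> \<ge> 0"
    using couplings_nonneg[OF \<pi>] uvc(1) by (intro sum_nonneg mult_nonneg_nonneg) auto
  finally have "0 < c"
    using separation SW_le_pairing[OF \<pi>, of d] uvc(2) \<open>0 < \<epsilon>\<close> by (cases "c = 0") auto
  show ?thesis
  proof
    show "(- u /\<^sub>R c)$k + (- v /\<^sub>R c)$l \<le> d$k$l" for k l
      using uvc(1)[of k l] \<open>0 < c\<close> by (simp add: field_simps)
    show "SW \<alpha> \<beta> d - \<epsilon> < (- u /\<^sub>R c) \<bullet> \<alpha> + (- v /\<^sub>R c) \<bullet> \<beta>"
      using separation \<open>0 < c\<close> by (simp add: field_simps)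
  qed
qed

theorem strong_duality:
  assumes \<alpha>: "\<alpha> \<in> prob_simplex" and \<beta>: "\<beta> \<in> prob_simplex" and d: "\<forall>k l. 0 \<le> d$k$l"
    and f: "f \<in> dual_sols \<alpha> \<beta> d"
  shows "dual_obj \<alpha> \<beta> d f = SW \<alpha> \<beta> d"
proof (rule antisym[OF dual_obj_le_SW[OF \<alpha> \<beta>] field_le_epsilon])
  fix \<epsilon> :: real assume "0 < \<epsilon>"
  then obtain u v where "\<And>k l. u$k + v$l \<le> d$k$l" "SW \<alpha> \<beta> d - \<epsilon> < u \<bullet> \<alpha> + v \<bullet> \<beta>"
    using near_optimal_dual_pair[OF \<alpha> \<beta>, where d = d] by blast
  moreover obtain g where "g \<in> dual_box d" "u \<bullet> \<alpha> + v \<bullet> \<beta> \<le> dual_obj \<alpha> \<beta> d g"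
    using dual_box_dominates_feasible_pair[OF \<alpha> \<beta> d] calculation(1) by blast
  ultimately show "SW \<alpha> \<beta> d \<le> dual_obj \<alpha> \<beta> d f + \<epsilon>"
    using f unfolding dual_sols_def by force
qed

type_synonym 'k ot_data = "(real^'k) \<times> (real^'k) \<times> (real^'k^'k)"

definition ot_domain :: "('k::finite) ot_data set" where
  "ot_domain = prob_simplex \<times> prob_simplex \<times> {d. \<forall>k l. 0 \<le> d$k$l}"

lemma mem_ot_domain [simp]:
  "(\<alpha>, \<beta>, d) \<in> ot_domain \<longleftrightarrow> \<alpha> \<in> prob_simplex \<and> \<beta> \<in> prob_simplex \<and> (\<forall>k l. 0 \<le> d$k$l)"
  by (simp add: ot_domain_def)

lemma closed_ot_domain: "closed ot_domain"
  unfolding ot_domain_def prob_simplex_def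
  by (intro closed_Times closed_Collect_conj closed_Collect_all closed_Collect_le closed_Collect_eq
      continuous_intros)

lemma dual_sols_iff:
  assumes "(\<alpha>, \<beta>, d) \<in> ot_domain"
  shows "f \<in> dual_sols \<alpha> \<beta> d \<longleftrightarrow> f \<in> dual_box d \<and> dual_obj \<alpha> \<beta> d f = SW \<alpha> \<beta> d"
  using assms strong_duality dual_obj_le_SW by (auto simp: dual_sols_def)

lemma dual_obj_diff: "dual_obj \<alpha>' \<beta>' d f - dual_obj \<alpha> \<beta> d f = dual_obj (\<alpha>' - \<alpha>) (\<beta>' - \<beta>) d f"
  by (simp add: dual_obj_def inner_diff_right)

lemma dual_obj_scaleR: "dual_obj (c *\<^sub>R x) (c *\<^sub>R y) d f = c * dual_obj x y d f"
  by (simp add: dual_obj_def algebra_simps)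

lemma pairing_scaleR: "pairing \<pi> (c *\<^sub>R z) = c * pairing \<pi> z"
  by (simp add: pairing_eq_inner)

lemma abs_dual_obj_le:
  "f \<in> dual_box d \<Longrightarrow> \<bar>dual_obj x y d f\<bar> \<le> transform_bound d * (norm x + norm y)"
  unfolding dual_obj_def distrib_left
  by (rule order_trans[OF abs_triangle_ineq add_mono]; rule order_trans[OF Cauchy_Schwarz_ineq2];
      simp add: mult_right_mono norm_ctrans_le_transform_bound norm_cctrans_le_transform_bound)

lemma SW_diff_ge:
  assumes "(\<alpha>, \<beta>, d) \<in> ot_domain" "\<pi>' \<in> opt_couplings \<alpha>' \<beta>' d'" "f \<in> dual_sols \<alpha> \<beta> d"
  shows "pairing \<pi>' (d' - d) + dual_obj (\<alpha>' - \<alpha>) (\<beta>' - \<beta>) d f \<le> SW \<alpha>' \<beta>' d' - SW \<alpha> \<beta> d"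
proof -
  have "SW \<alpha> \<beta> d = dual_obj \<alpha> \<beta> d f" using assms(1,3) by (simp add: dual_sols_iff)
  moreover have "dual_obj \<alpha>' \<beta>' d f \<le> pairing \<pi>' d" "pairing \<pi>' d' = SW \<alpha>' \<beta>' d'"
    using assms(2) dual_obj_le_pairing by (auto simp: opt_couplings_def)
  ultimately show ?thesis
    by (simp add: pairing_eq_inner inner_diff_right flip: dual_obj_diff)
qed

lemma SW_diff_le:
  assumes "(\<alpha>', \<beta>', d') \<in> ot_domain" "\<pi> \<in> opt_couplings \<alpha> \<beta> d" "f' \<in> dual_sols \<alpha>' \<beta>' d'"
  shows "SW \<alpha>' \<beta>' d' - SW \<alpha> \<beta> d \<le> pairing \<pi> (d' - d) + dual_obj (\<alpha>' - \<alpha>) (\<beta>' - \<beta>) d' f'"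
  using SW_diff_ge[OF assms] by (simp add: pairing_eq_inner dual_obj_def inner_diff_right)

lemma abs_SW_diff_le:
  assumes "(\<alpha>, \<beta>, d) \<in> ot_domain" "(\<alpha>', \<beta>', d') \<in> ot_domain"
  shows "\<bar>SW \<alpha>' \<beta>' d' - SW \<alpha> \<beta> d\<bar>
    \<le> norm (d' - d) + max (transform_bound d) (transform_bound d') * (norm (\<alpha>' - \<alpha>) + norm (\<beta>' - \<beta>))"
proof -
  obtain \<pi> \<pi>' f f' where \<pi>: "\<pi> \<in> opt_couplings \<alpha> \<beta> d" and \<pi>': "\<pi>' \<in> opt_couplings \<alpha>' \<beta>' d'"
    and f: "f \<in> dual_sols \<alpha> \<beta> d" and f': "f' \<in> dual_sols \<alpha>' \<beta>' d'"
    using assms opt_couplings_nonempty dual_sols_nonempty by (metis equals0I mem_ot_domain)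
  let ?n = "norm (\<alpha>' - \<alpha>) + norm (\<beta>' - \<beta>)"
  have "\<bar>pairing \<pi> (d' - d)\<bar> \<le> norm (d' - d)" "\<bar>pairing \<pi>' (d' - d)\<bar> \<le> norm (d' - d)"
    using \<pi> \<pi>' assms by (auto simp: opt_couplings_def intro: abs_pairing_le_norm)
  moreover have "\<bar>dual_obj (\<alpha>' - \<alpha>) (\<beta>' - \<beta>) d f\<bar> \<le> max (transform_bound d) (transform_bound d') * ?n"
    using f by (intro order_trans[OF abs_dual_obj_le mult_right_mono]) (auto simp: dual_sols_def)
  moreover have "\<bar>dual_obj (\<alpha>' - \<alpha>) (\<beta>' - \<beta>) d' f'\<bar> \<le> max (transform_bound d) (transform_bound d') * ?n"
    using f' by (intro order_trans[OF abs_dual_obj_le mult_right_mono]) (auto simp: dual_sols_def)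
  ultimately show ?thesis
    using SW_diff_ge[OF assms(1) \<pi>' f] SW_diff_le[OF assms(2) \<pi> f'] by (simp add: abs_le_iff)
qed

lemma tendsto_SW:
  assumes "(\<alpha>, \<beta>, d) \<in> ot_domain" "\<And>j. (A j, B j, D j) \<in> ot_domain"
    and "A \<longlonglongrightarrow> \<alpha>" "B \<longlonglongrightarrow> \<beta>" "D \<longlonglongrightarrow> d"
  shows "(\<lambda>j. SW (A j) (B j) (D j)) \<longlonglongrightarrow> SW \<alpha> \<beta> d"
proof (rule tendsto_if_dist_le_null)
  show "\<forall>\<^sub>F j in sequentially. dist (SW (A j) (B j) (D j)) (SW \<alpha> \<beta> d)
    \<le> norm (D j - d) + max (transform_bound d) (transform_bound (D j)) * (norm (A j - \<alpha>) + norm (B j - \<beta>))"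
    using abs_SW_diff_le[OF assms(1,2)] by (simp add: dist_real_def)
  have "(\<lambda>j. norm (D j - d) + max (transform_bound d) (transform_bound (D j)) * (norm (A j - \<alpha>) + norm (B j - \<beta>)))
    \<longlonglongrightarrow> 0 + max (transform_bound d) (transform_bound d) * (0 + 0)"
    unfolding transform_bound_def
    by (intro tendsto_intros tendsto_norm_zero LIM_zero assms)
  then show "(\<lambda>j. norm (D j - d) + max (transform_bound d) (transform_bound (D j)) * (norm (A j - \<alpha>) + norm (B j - \<beta>)))
    \<longlonglongrightarrow> 0" by simp
qed

definition SW_data :: "('k::finite) ot_data \<Rightarrow> real" where
  "SW_data = (\<lambda>(\<alpha>, \<beta>, d). SW \<alpha> \<beta> d)"

lemma continuous_on_SW_data: "continuous_on ot_domain SW_data"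
proof (rule continuous_on_sequentiallyI)
  fix u and \<theta> :: "'a ot_data"
  assume u: "\<forall>n. u n \<in> ot_domain" and "\<theta> \<in> ot_domain" and lim: "u \<longlonglongrightarrow> \<theta>"
  obtain \<alpha> \<beta> d where \<theta>: "\<theta> = (\<alpha>, \<beta>, d)" by (metis prod.exhaust)
  have "(\<lambda>n. SW (fst (u n)) (fst (snd (u n))) (snd (snd (u n)))) \<longlonglongrightarrow> SW \<alpha> \<beta> d"
  proof (rule tendsto_SW)
    show "(\<alpha>, \<beta>, d) \<in> ot_domain" using \<open>\<theta> \<in> ot_domain\<close> by (simp only: \<theta>)
    show "(fst (u j), fst (snd (u j)), snd (snd (u j))) \<in> ot_domain" for j using u by simp
    show "(\<lambda>j. fst (u j)) \<longlonglongrightarrow> \<alpha>" "(\<lambda>j. fst (snd (u j))) \<longlonglongrightarrow> \<beta>" "(\<lambda>j. snd (snd (u j))) \<longlonglongrightarrow> d"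
      using tendsto_fst[OF lim] tendsto_fst[OF tendsto_snd[OF lim]] tendsto_snd[OF tendsto_snd[OF lim]]
      by (simp_all add: \<theta>)
  qed
  then show "(\<lambda>n. SW_data (u n)) \<longlonglongrightarrow> SW_data \<theta>"
    by (simp add: SW_data_def case_prod_beta \<theta>)
qed

lemma borel_measurable_SW_data:
  assumes "\<Theta> \<in> borel_measurable M" "\<And>\<omega>. \<omega> \<in> space M \<Longrightarrow> \<Theta> \<omega> \<in> ot_domain"
  shows "(\<lambda>\<omega>. SW_data (\<Theta> \<omega>)) \<in> borel_measurable M"
proof -
  have "(\<lambda>\<omega>. if \<Theta> \<omega> \<in> ot_domain then SW_data (\<Theta> \<omega>) else 0) \<in> borel_measurable M"
    by (rule measurable_compose[OF assms(1) borel_measurable_continuous_on_if[OF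
          borel_closed[OF closed_ot_domain] continuous_on_SW_data continuous_on_const]])
  then show ?thesis by (rule measurable_cong[THEN iffD1, rotated]) (simp add: assms(2))
qed

section \<open>The directional derivative\<close>

definition SW_deriv :: "('k::finite) ot_data \<Rightarrow> 'k ot_data \<Rightarrow> real" where
  "SW_deriv \<theta> g = (case \<theta> of (\<alpha>, \<beta>, d) \<Rightarrow> case g of (g\<alpha>, g\<beta>, gd) \<Rightarrow>
     Inf ((\<lambda>\<pi>. pairing \<pi> gd) ` opt_couplings \<alpha> \<beta> d) + Sup ((\<lambda>f. dual_obj g\<alpha> g\<beta> d f) ` dual_sols \<alpha> \<beta> d))"

lemma bdd_below_opt_pairings:
  "\<alpha> \<in> prob_simplex \<Longrightarrow> bdd_below ((\<lambda>\<pi>. pairing \<pi> z) ` opt_couplings \<alpha> \<beta> d)"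
proof (rule bdd_belowI2)
  fix \<pi> assume "\<alpha> \<in> prob_simplex" "\<pi> \<in> opt_couplings \<alpha> \<beta> d"
  then have "\<bar>pairing \<pi> z\<bar> \<le> norm z" by (intro abs_pairing_le_norm) (auto simp: opt_couplings_def)
  then show "- norm z \<le> pairing \<pi> z" by simp
qed

lemma bdd_above_dual_values: "bdd_above ((\<lambda>f. dual_obj x y d f) ` dual_sols \<alpha> \<beta> d)"
proof (rule bdd_aboveI2)
  fix f assume "f \<in> dual_sols \<alpha> \<beta> d"
  then have "\<bar>dual_obj x y d f\<bar> \<le> transform_bound d * (norm x + norm y)"
    by (intro abs_dual_obj_le) (simp add: dual_sols_def)
  then show "dual_obj x y d f \<le> transform_bound d * (norm x + norm y)" by simp
qed

lemma abs_SW_deriv_diff_le: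
  assumes "(\<alpha>, \<beta>, d) \<in> ot_domain"
  shows "\<bar>SW_deriv (\<alpha>, \<beta>, d) (x, y, z) - SW_deriv (\<alpha>, \<beta>, d) (x', y', z')\<bar>
    \<le> norm (z - z') + transform_bound d * (norm (x - x') + norm (y - y'))"
proof -
  have "\<bar>Inf ((\<lambda>\<pi>. pairing \<pi> z) ` opt_couplings \<alpha> \<beta> d) - Inf ((\<lambda>\<pi>. pairing \<pi> z') ` opt_couplings \<alpha> \<beta> d)\<bar>
    \<le> norm (z - z')"
  proof (rule abs_Inf_image_diff_le)
    fix \<pi> assume "\<pi> \<in> opt_couplings \<alpha> \<beta> d"
    then show "\<bar>pairing \<pi> z - pairing \<pi> z'\<bar> \<le> norm (z - z')"
      using assms abs_pairing_le_norm[of \<pi> \<alpha> \<beta> "z - z'"]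
      by (simp add: opt_couplings_def pairing_eq_inner inner_diff_right)
  qed (use assms opt_couplings_nonempty bdd_below_opt_pairings in auto)
  moreover have "\<bar>Sup ((\<lambda>f. dual_obj x y d f) ` dual_sols \<alpha> \<beta> d) - Sup ((\<lambda>f. dual_obj x' y' d f) ` dual_sols \<alpha> \<beta> d)\<bar>
    \<le> transform_bound d * (norm (x - x') + norm (y - y'))"
  proof (rule abs_Sup_image_diff_le)
    fix f assume "f \<in> dual_sols \<alpha> \<beta> d"
    then show "\<bar>dual_obj x y d f - dual_obj x' y' d f\<bar> \<le> transform_bound d * (norm (x - x') + norm (y - y'))"
      unfolding dual_obj_diff by (intro abs_dual_obj_le) (simp add: dual_sols_def)
  qed (use assms dual_sols_nonempty bdd_above_dual_values in auto)
  ultimately show ?thesis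
    unfolding SW_deriv_def by simp
qed

lemma continuous_on_SW_deriv:
  assumes "\<theta> \<in> ot_domain"
  shows "continuous_on UNIV (SW_deriv \<theta>)"
  unfolding continuous_on_def
proof
  obtain \<alpha> \<beta> d where \<theta>: "\<theta> = (\<alpha>, \<beta>, d)" by (metis prod.exhaust)
  fix g :: "'a ot_data"
  obtain x y z where g: "g = (x, y, z)" by (metis prod.exhaust)
  let ?b = "\<lambda>g'. norm (snd (snd g') - z) + transform_bound d * (norm (fst g' - x) + norm (fst (snd g') - y))"
  show "(SW_deriv \<theta> \<longlongrightarrow> SW_deriv \<theta> g) (at g within UNIV)"
  proof (rule tendsto_if_dist_le_null)
    show "\<forall>\<^sub>F g' in at g within UNIV. dist (SW_deriv \<theta> g') (SW_deriv \<theta> g) \<le> ?b g'"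
    proof (intro always_eventually allI)
      fix g' :: "'a ot_data"
      obtain x' y' z' where "g' = (x', y', z')" by (metis prod.exhaust)
      then show "dist (SW_deriv \<theta> g') (SW_deriv \<theta> g) \<le> ?b g'"
        using abs_SW_deriv_diff_le[OF assms[unfolded \<theta>], of x' y' z' x y z] by (simp add: \<theta> g dist_real_def)
    qed
    have "(?b \<longlongrightarrow> ?b g) (at g within UNIV)"
      by (intro tendsto_intros tendsto_ident_at)
    then show "(?b \<longlongrightarrow> 0) (at g within UNIV)" by (simp add: g)
  qed
qed

lemma SW_quotient_error_bounds:
  assumes \<theta>: "(\<alpha>, \<beta>, d) \<in> ot_domain" and "0 < t"
    and \<theta>': "(\<alpha>', \<beta>', d') \<in> ot_domain" "\<alpha>' = \<alpha> + x /\<^sub>R t" "\<beta>' = \<beta> + y /\<^sub>R t" "d' = d + z /\<^sub>R t"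
    and \<pi>': "\<pi>' \<in> opt_couplings \<alpha>' \<beta>' d'" and f': "f' \<in> dual_sols \<alpha>' \<beta>' d'"
    and \<pi>: "\<pi> \<in> opt_couplings \<alpha> \<beta> d" and f: "f \<in> dual_sols \<alpha> \<beta> d"
  shows "pairing \<pi>' z - pairing \<pi> z \<le> t * (SW \<alpha>' \<beta>' d' - SW \<alpha> \<beta> d) - SW_deriv (\<alpha>, \<beta>, d) (x, y, z)"
    and "t * (SW \<alpha>' \<beta>' d' - SW \<alpha> \<beta> d) - SW_deriv (\<alpha>, \<beta>, d) (x, y, z) \<le> dual_obj x y d' f' - dual_obj x y d f"
proof -
  let ?q = "t * (SW \<alpha>' \<beta>' d' - SW \<alpha> \<beta> d)"
  have scale: "t * (pairing \<rho> (d' - d) + dual_obj (\<alpha>' - \<alpha>) (\<beta>' - \<beta>) e g) = pairing \<rho> z + dual_obj x y e g"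
    for \<rho> e g
    using \<open>0 < t\<close> by (simp add: \<theta>' pairing_scaleR dual_obj_scaleR distrib_left field_simps)
  have lower: "pairing \<pi>' z + dual_obj x y d g \<le> ?q" if "g \<in> dual_sols \<alpha> \<beta> d" for g
    using mult_left_mono[OF SW_diff_ge[OF \<theta> \<pi>' that], of t] \<open>0 < t\<close> by (simp add: scale)
  have upper: "?q \<le> pairing \<rho> z + dual_obj x y d' f'" if "\<rho> \<in> opt_couplings \<alpha> \<beta> d" for \<rho>
    using mult_left_mono[OF SW_diff_le[OF \<theta>'(1) that f'], of t] \<open>0 < t\<close> by (simp add: scale)
  have "Sup ((\<lambda>g. dual_obj x y d g) ` dual_sols \<alpha> \<beta> d) \<le> ?q - pairing \<pi>' z"
    using lower \<theta> dual_sols_nonempty by (intro cSup_least) force+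
  moreover have "Inf ((\<lambda>\<rho>. pairing \<rho> z) ` opt_couplings \<alpha> \<beta> d) \<le> pairing \<pi> z"
    using \<pi> \<theta> by (intro cInf_lower imageI bdd_below_opt_pairings) auto
  ultimately show "pairing \<pi>' z - pairing \<pi> z \<le> ?q - SW_deriv (\<alpha>, \<beta>, d) (x, y, z)"
    by (simp add: SW_deriv_def)
  have "?q - dual_obj x y d' f' \<le> Inf ((\<lambda>\<rho>. pairing \<rho> z) ` opt_couplings \<alpha> \<beta> d)"
    using upper \<theta> opt_couplings_nonempty by (intro cInf_greatest) force+
  moreover have "dual_obj x y d f \<le> Sup ((\<lambda>g. dual_obj x y d g) ` dual_sols \<alpha> \<beta> d)"
    using f by (intro cSup_upper imageI bdd_above_dual_values)
  ultimately show "?q - SW_deriv (\<alpha>, \<beta>, d) (x, y, z) \<le> dual_obj x y d' f' - dual_obj x y d f"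
    by (simp add: SW_deriv_def)
qed

lemma opt_couplings_limit:
  assumes "(\<alpha>, \<beta>, d) \<in> ot_domain" "\<And>j. (A j, B j, D j) \<in> ot_domain"
    and "A \<longlonglongrightarrow> \<alpha>" "B \<longlonglongrightarrow> \<beta>" "D \<longlonglongrightarrow> d"
    and "\<And>j. P j \<in> opt_couplings (A j) (B j) (D j)" "P \<longlonglongrightarrow> \<pi>"
  shows "\<pi> \<in> opt_couplings \<alpha> \<beta> d"
proof -
  have lim: "(\<lambda>j. (A j, B j, P j)) \<longlonglongrightarrow> (\<alpha>, \<beta>, \<pi>)"
    by (intro tendsto_Pair assms(3,4,7))
  have "(\<alpha>, \<beta>, \<pi>) \<in> {(\<alpha>, \<beta>, \<pi>). \<pi> \<in> couplings \<alpha> \<beta>}"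
    by (rule closed_sequentially[OF closed_couplings_graph _ lim]) (use assms(6) in \<open>auto simp: opt_couplings_def\<close>)
  moreover have "(\<lambda>j. pairing (P j) (D j)) \<longlonglongrightarrow> pairing \<pi> d"
    unfolding pairing_eq_inner by (intro tendsto_intros assms(5,7))
  moreover have "(\<lambda>j. pairing (P j) (D j)) \<longlonglongrightarrow> SW \<alpha> \<beta> d"
    using tendsto_SW[OF assms(1-5)] assms(6) by (simp add: opt_couplings_def)
  ultimately show ?thesis
    unfolding opt_couplings_def using LIMSEQ_unique by blast
qed

lemma dual_sols_limit:
  assumes "(\<alpha>, \<beta>, d) \<in> ot_domain" "\<And>j. (A j, B j, D j) \<in> ot_domain"
    and "A \<longlonglongrightarrow> \<alpha>" "B \<longlonglongrightarrow> \<beta>" "D \<longlonglongrightarrow> d"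
    and "\<And>j. F j \<in> dual_sols (A j) (B j) (D j)" "F \<longlonglongrightarrow> f"
  shows "f \<in> dual_sols \<alpha> \<beta> d"
proof -
  have "\<bar>f$k\<bar> \<le> dual_radius d" for k
  proof (rule tendsto_le[OF trivial_limit_sequentially])
    show "(\<lambda>j. dual_radius (D j)) \<longlonglongrightarrow> dual_radius d" "(\<lambda>j. \<bar>F j $ k\<bar>) \<longlonglongrightarrow> \<bar>f$k\<bar>"
      by (intro tendsto_intros assms(5,7))+
    show "\<forall>\<^sub>F j in sequentially. \<bar>F j $ k\<bar> \<le> dual_radius (D j)"
      using assms(6) by (simp add: dual_sols_def dual_box_eq)
  qed
  moreover have "(\<lambda>j. dual_obj (A j) (B j) (D j) (F j)) \<longlonglongrightarrow> dual_obj \<alpha> \<beta> d f"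
    unfolding dual_obj_def by (intro tendsto_intros assms(3-5,7))
  moreover have "(\<lambda>j. dual_obj (A j) (B j) (D j) (F j)) \<longlonglongrightarrow> SW \<alpha> \<beta> d"
    using tendsto_SW[OF assms(1-5)] assms(2,6) by (simp add: dual_sols_iff)
  ultimately show ?thesis
    using LIMSEQ_unique assms(1) by (auto simp: dual_sols_iff dual_box_eq)
qed

lemma optimal_solutions_subconverge:
  fixes A B :: "nat \<Rightarrow> real^'k::finite"
  assumes \<theta>: "(\<alpha>, \<beta>, d) \<in> ot_domain" and adm: "\<And>j. (A j, B j, D j) \<in> ot_domain"
    and lim: "A \<longlonglongrightarrow> \<alpha>" "B \<longlonglongrightarrow> \<beta>" "D \<longlonglongrightarrow> d"
  obtains s P F \<pi> f where "strict_mono s"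
    "\<And>j. P j \<in> opt_couplings (A j) (B j) (D j)" "\<And>j. F j \<in> dual_sols (A j) (B j) (D j)"
    "(\<lambda>j. P (s j)) \<longlonglongrightarrow> \<pi>" "(\<lambda>j. F (s j)) \<longlonglongrightarrow> f"
    "\<pi> \<in> opt_couplings \<alpha> \<beta> d" "f \<in> dual_sols \<alpha> \<beta> d"
proof -
  have "opt_couplings (A j) (B j) (D j) \<noteq> {}" "dual_sols (A j) (B j) (D j) \<noteq> {}" for j
    using adm[of j] by (simp_all add: opt_couplings_nonempty dual_sols_nonempty)
  then have "\<forall>j. \<exists>\<pi>. \<pi> \<in> opt_couplings (A j) (B j) (D j)" "\<forall>j. \<exists>f. f \<in> dual_sols (A j) (B j) (D j)"
    by blast+
  then obtain P F where P: "\<And>j. P j \<in> opt_couplings (A j) (B j) (D j)"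
    and F: "\<And>j. F j \<in> dual_sols (A j) (B j) (D j)"
    by metis
  have "(\<lambda>j. dual_radius (D j)) \<longlonglongrightarrow> dual_radius d"
    by (intro tendsto_intros lim)
  then have "bounded (range (\<lambda>j. dual_radius (D j)))" by (rule convergent_imp_bounded)
  then obtain M where M: "\<And>j. dual_radius (D j) \<le> M"
    unfolding bounded_iff by (auto dest: abs_le_D1)
  have "norm (P j, F j) \<le> 1 + CARD('k) * M" for j
  proof -
    have "norm (P j) \<le> 1"
      using P adm by (auto simp: opt_couplings_def intro: norm_coupling_le_1)
    moreover have "norm (F j) \<le> CARD('k) * M"
      using F norm_le_if_dual_box M[of j] by (force simp: dual_sols_def intro: order_trans)
    ultimately show ?thesis using norm_Pair_le[of "P j" "F j"] by linarith
  qed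
  then have "bounded (range (\<lambda>j. (P j, F j)))" by (auto simp: bounded_iff)
  then obtain l s where s: "strict_mono s" and "((\<lambda>j. (P j, F j)) \<circ> s) \<longlonglongrightarrow> l"
    using bounded_imp_convergent_subsequence by blast
  moreover obtain \<pi> f where "l = (\<pi>, f)" by (cases l)
  ultimately have PF: "(\<lambda>j. P (s j)) \<longlonglongrightarrow> \<pi>" "(\<lambda>j. F (s j)) \<longlonglongrightarrow> f"
    using tendsto_fst tendsto_snd by (fastforce simp: comp_def)+
  have lim_s: "(\<lambda>j. A (s j)) \<longlonglongrightarrow> \<alpha>" "(\<lambda>j. B (s j)) \<longlonglongrightarrow> \<beta>" "(\<lambda>j. D (s j)) \<longlonglongrightarrow> d"
    using LIMSEQ_subseq_LIMSEQ[OF lim(1) s] LIMSEQ_subseq_LIMSEQ[OF lim(2) s]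
      LIMSEQ_subseq_LIMSEQ[OF lim(3) s] by (simp_all add: comp_def)
  have "\<pi> \<in> opt_couplings \<alpha> \<beta> d"
    using adm P by (intro opt_couplings_limit[OF \<theta> _ lim_s _ PF(1)])
  moreover have "f \<in> dual_sols \<alpha> \<beta> d"
    using adm F by (intro dual_sols_limit[OF \<theta> _ lim_s _ PF(2)])
  ultimately show ?thesis using that s P F PF by blast
qed

text \<open>Optimal couplings and dual solutions at the perturbed points subconverge to optimal ones at
  the base point, where the two bounds of SW_quotient_error_bounds vanish.\<close>
lemma SW_quotient_error_subseq:
  fixes \<theta> :: "('k::finite) ot_data"
  assumes \<theta>: "\<theta> \<in> ot_domain" and t: "\<And>j. 0 < t j" "filterlim t at_top sequentially"
    and adm: "\<And>j. \<theta> + g j /\<^sub>R t j \<in> ot_domain" and "g \<longlonglongrightarrow> g0"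
  shows "\<exists>s. strict_mono s \<and>
    (\<lambda>j. t (s j) * (SW_data (\<theta> + g (s j) /\<^sub>R t (s j)) - SW_data \<theta>) - SW_deriv \<theta> (g (s j))) \<longlonglongrightarrow> 0"
proof -
  obtain \<alpha> \<beta> d where \<theta>_eq: "\<theta> = (\<alpha>, \<beta>, d)" by (metis prod.exhaust)
  define x y z where "x j = fst (g j)" and "y j = fst (snd (g j))" and "z j = snd (snd (g j))" for j
  define A B D where "A j = \<alpha> + x j /\<^sub>R t j" and "B j = \<beta> + y j /\<^sub>R t j" and "D j = d + z j /\<^sub>R t j" for j
  have g_eq: "g j = (x j, y j, z j)" for j by (simp add: x_def y_def z_def)
  have adm': "(A j, B j, D j) \<in> ot_domain" for j
    using adm[of j] by (simp add: \<theta>_eq g_eq A_def B_def D_def)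
  have lim_xyz: "x \<longlonglongrightarrow> fst g0" "y \<longlonglongrightarrow> fst (snd g0)" "z \<longlonglongrightarrow> snd (snd g0)"
    using tendsto_fst[OF \<open>g \<longlonglongrightarrow> g0\<close>] tendsto_fst[OF tendsto_snd[OF \<open>g \<longlonglongrightarrow> g0\<close>]]
      tendsto_snd[OF tendsto_snd[OF \<open>g \<longlonglongrightarrow> g0\<close>]]
    unfolding x_def[abs_def] y_def[abs_def] z_def[abs_def] by simp_all
  have lim: "A \<longlonglongrightarrow> \<alpha>" "B \<longlonglongrightarrow> \<beta>" "D \<longlonglongrightarrow> d"
    unfolding A_def[abs_def] B_def[abs_def] D_def[abs_def]
    by (rule tendsto_add_scaleR_inverse_at_top[OF t(2) lim_xyz(1)]
        tendsto_add_scaleR_inverse_at_top[OF t(2) lim_xyz(2)]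
        tendsto_add_scaleR_inverse_at_top[OF t(2) lim_xyz(3)])+
  obtain s P F \<pi> f where s: "strict_mono s" and P: "\<And>j. P j \<in> opt_couplings (A j) (B j) (D j)"
    and F: "\<And>j. F j \<in> dual_sols (A j) (B j) (D j)"
    and PF: "(\<lambda>j. P (s j)) \<longlonglongrightarrow> \<pi>" "(\<lambda>j. F (s j)) \<longlonglongrightarrow> f"
    and \<pi>: "\<pi> \<in> opt_couplings \<alpha> \<beta> d" and f: "f \<in> dual_sols \<alpha> \<beta> d"
    using optimal_solutions_subconverge[OF \<theta>[unfolded \<theta>_eq] adm' lim] by metis
  have lim_xyz_s: "(\<lambda>j. x (s j)) \<longlonglongrightarrow> fst g0" "(\<lambda>j. y (s j)) \<longlonglongrightarrow> fst (snd g0)"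
      "(\<lambda>j. z (s j)) \<longlonglongrightarrow> snd (snd g0)"
    using LIMSEQ_subseq_LIMSEQ[OF lim_xyz(1) s] LIMSEQ_subseq_LIMSEQ[OF lim_xyz(2) s]
      LIMSEQ_subseq_LIMSEQ[OF lim_xyz(3) s] by (simp_all add: comp_def)
  define err where
    "err j = t j * (SW (A j) (B j) (D j) - SW \<alpha> \<beta> d) - SW_deriv (\<alpha>, \<beta>, d) (x j, y j, z j)" for j
  have bounds: "pairing (P j) (z j) - pairing \<pi> (z j) \<le> err j"
    "err j \<le> dual_obj (x j) (y j) (D j) (F j) - dual_obj (x j) (y j) d f" for j
    unfolding err_def
    by (rule SW_quotient_error_bounds[OF \<theta>[unfolded \<theta>_eq] t(1) adm' A_def B_def D_def P F \<pi> f])+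
  have "(\<lambda>j. pairing (P (s j)) (z (s j)) - pairing \<pi> (z (s j)))
    \<longlonglongrightarrow> pairing \<pi> (snd (snd g0)) - pairing \<pi> (snd (snd g0))"
    unfolding pairing_eq_inner by (intro tendsto_intros PF lim_xyz_s)
  then have lower: "(\<lambda>j. pairing (P (s j)) (z (s j)) - pairing \<pi> (z (s j))) \<longlonglongrightarrow> 0" by simp
  have "(\<lambda>j. dual_obj (x (s j)) (y (s j)) (D (s j)) (F (s j)) - dual_obj (x (s j)) (y (s j)) d f)
    \<longlonglongrightarrow> dual_obj (fst g0) (fst (snd g0)) d f - dual_obj (fst g0) (fst (snd g0)) d f"
    unfolding dual_obj_def
    by (intro tendsto_intros PF lim_xyz_s LIMSEQ_subseq_LIMSEQ[OF lim(3) s, unfolded comp_def])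
  then have upper:
    "(\<lambda>j. dual_obj (x (s j)) (y (s j)) (D (s j)) (F (s j)) - dual_obj (x (s j)) (y (s j)) d f) \<longlonglongrightarrow> 0"
    by simp
  have "(\<lambda>j. err (s j)) \<longlonglongrightarrow> 0"
    by (rule tendsto_sandwich[OF always_eventually always_eventually lower upper]) (simp_all add: bounds)
  then show ?thesis
    using s by (auto simp: err_def \<theta>_eq g_eq A_def B_def D_def SW_data_def)
qed

lemma SW_quotient_uniform:
  fixes \<theta> :: "('k::finite) ot_data"
  assumes "\<theta> \<in> ot_domain" "\<And>n. 0 < a n" "filterlim a at_top sequentially" "0 < \<epsilon>"
  shows "\<forall>\<^sub>F n in sequentially. \<forall>\<theta>'\<in>ot_domain. norm (a n *\<^sub>R (\<theta>' - \<theta>)) \<le> R \<longrightarrow>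
    \<bar>a n * (SW_data \<theta>' - SW_data \<theta>) - SW_deriv \<theta> (a n *\<^sub>R (\<theta>' - \<theta>))\<bar> < \<epsilon>"
proof -
  have "\<forall>\<^sub>F n in sequentially. \<forall>g\<in>{g. \<theta> + g /\<^sub>R a n \<in> ot_domain}. norm g \<le> R \<longrightarrow>
    \<bar>a n * (SW_data (\<theta> + g /\<^sub>R a n) - SW_data \<theta>) - SW_deriv \<theta> g\<bar> < \<epsilon>"
  proof (rule eventually_uniform_if_subseq_tendsto[OF _ assms(4)])
    fix r g g0
    assume r: "strict_mono r" and g: "\<And>j. g j \<in> {g. \<theta> + g /\<^sub>R a (r j) \<in> ot_domain}" and "g \<longlonglongrightarrow> g0"
    have "filterlim (\<lambda>j. a (r j)) at_top sequentially"
      using filterlim_compose[OF assms(3) filterlim_subseq[OF r]] by (simp add: comp_def)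
    then show "\<exists>s. strict_mono s \<and> (\<lambda>j. a (r (s j)) * (SW_data (\<theta> + g (s j) /\<^sub>R a (r (s j))) - SW_data \<theta>)
      - SW_deriv \<theta> (g (s j))) \<longlonglongrightarrow> 0"
      using SW_quotient_error_subseq[OF assms(1), of "\<lambda>j. a (r j)" g g0] assms(2) g \<open>g \<longlonglongrightarrow> g0\<close>
      by simp
  qed
  moreover have "\<theta> + (a n *\<^sub>R (\<theta>' - \<theta>)) /\<^sub>R a n = \<theta>'" for n \<theta>'
    using assms(2)[of n] by simp
  ultimately show ?thesis
    by (elim eventually_mono) (metis mem_Collect_eq)
qed

section \<open>An extended continuous mapping theorem\<close>

definition tail_cutoff :: "real \<Rightarrow> 'a::real_normed_vector \<Rightarrow> real" where
  "tail_cutoff R x = min 1 (max 0 (norm x - R))"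

lemma continuous_on_tail_cutoff: "continuous_on S (tail_cutoff R)"
  unfolding tail_cutoff_def by (intro continuous_intros)

lemma tail_cutoff_bounds: "0 \<le> tail_cutoff R x" "tail_cutoff R x \<le> 1"
  by (auto simp: tail_cutoff_def)

lemma tail_cutoff_eq_1: "R + 1 \<le> norm x \<Longrightarrow> tail_cutoff R x = 1"
  by (simp add: tail_cutoff_def)

lemma borel_measurable_tail_cutoff [measurable]: "tail_cutoff R \<in> borel_measurable borel"
  by (rule borel_measurable_continuous_onI[OF continuous_on_tail_cutoff])

lemma bounded_range_tail_cutoff: "bounded (range (tail_cutoff R))"
  by (rule boundedI[of _ 1]) (auto simp: tail_cutoff_bounds abs_of_nonneg)

lemma (in prob_space) expectation_tail_cutoff_small:
  assumes "X \<in> borel_measurable M" "0 < \<eta>"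
  obtains R where "expectation (\<lambda>\<omega>. tail_cutoff R (X \<omega>)) < \<eta>"
proof -
  have "(\<lambda>m. expectation (\<lambda>\<omega>. tail_cutoff (real m) (X \<omega>))) \<longlonglongrightarrow> expectation (\<lambda>\<omega>. 0)"
  proof (rule integral_dominated_convergence[where w = "\<lambda>_. 1"])
    show "AE \<omega> in M. (\<lambda>m. tail_cutoff (real m) (X \<omega>)) \<longlonglongrightarrow> 0" for \<omega>
    proof (intro AE_I2 tendsto_eventually)
      show "\<forall>\<^sub>F m in sequentially. tail_cutoff (real m) (X \<omega>) = 0" for \<omega>
        using eventually_ge_at_top[of "nat \<lceil>norm (X \<omega>)\<rceil>"]
      proof eventually_elim
        case (elim m)
        then have "norm (X \<omega>) \<le> real m" by linarith
        then show ?case by (simp add: tail_cutoff_def)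
      qed
    qed
    show "AE \<omega> in M. norm (tail_cutoff (real m) (X \<omega>)) \<le> 1" for m
      by (intro AE_I2) (simp add: tail_cutoff_bounds abs_of_nonneg)
  qed (use assms(1) in simp_all)
  then have "\<forall>\<^sub>F m in sequentially. expectation (\<lambda>\<omega>. tail_cutoff (real m) (X \<omega>)) < \<eta>"
    using assms(2) by (simp add: order_tendstoD(2))
  then show ?thesis
    using that by (auto simp: eventually_sequentially)
qed

lemma (in prob_space) abs_expectation_diff_le:
  fixes f g w :: "'a \<Rightarrow> real"
  assumes [measurable]: "f \<in> borel_measurable M" "g \<in> borel_measurable M" "w \<in> borel_measurable M"
    and "\<And>x. \<bar>f x\<bar> \<le> B" "\<And>x. \<bar>g x\<bar> \<le> B" "\<And>x. \<bar>w x\<bar> \<le> 1"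
    and "\<And>x. x \<in> space M \<Longrightarrow> \<bar>f x - g x\<bar> \<le> c + b * w x"
  shows "\<bar>expectation f - expectation g\<bar> \<le> c + b * expectation w"
proof -
  have [simp]: "integrable M f" "integrable M g"
    by (rule integrable_const_bound[where B = B]; use assms(4,5) in simp)+
  have [simp]: "integrable M w"
    by (rule integrable_const_bound[where B = 1]; use assms(6) in simp)
  have "\<bar>expectation f - expectation g\<bar> = \<bar>expectation (\<lambda>x. f x - g x)\<bar>" by simp
  also have "\<dots> \<le> expectation (\<lambda>x. \<bar>f x - g x\<bar>)"
    using integral_abs_bound by blast
  also have "\<dots> \<le> expectation (\<lambda>x. c + b * w x)"
    using assms(7) by (intro integral_mono) auto
  also have "\<dots> = c + b * expectation w"
    by (simp add: prob_space)
  finally show ?thesis .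
qed

lemma weak_conv_rv_compose:
  fixes X :: "nat \<Rightarrow> 'w \<Rightarrow> 'a::metric_space" and D :: "'a \<Rightarrow> 'b::metric_space"
  assumes "weak_conv_rv M X N G" "continuous_on UNIV D"
  shows "weak_conv_rv M (\<lambda>n \<omega>. D (X n \<omega>)) N (\<lambda>\<omega>. D (G \<omega>))"
  unfolding weak_conv_rv_def
proof (intro allI impI, elim conjE)
  fix h :: "'b \<Rightarrow> real" assume "continuous_on UNIV h" "bounded (range h)"
  then have "continuous_on UNIV (\<lambda>x. h (D x))" "bounded (range (\<lambda>x. h (D x)))"
    using assms(2) by (auto intro: continuous_on_compose2 bounded_subset)
  then show "(\<lambda>n. \<integral>\<omega>. h (D (X n \<omega>)) \<partial>M n) \<longlonglongrightarrow> (\<integral>\<omega>. h (D (G \<omega>)) \<partial>N)"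
    using assms(1) unfolding weak_conv_rv_def by blast
qed

lemma uniformly_close_near_image:
  fixes D :: "'a::{heine_borel, real_normed_vector} \<Rightarrow> real" and h :: "real \<Rightarrow> real"
  assumes "continuous_on UNIV D" "continuous_on UNIV h" "0 < e"
  obtains \<delta> where "0 < \<delta>" "\<And>x y. norm x \<le> R \<Longrightarrow> \<bar>y - D x\<bar> < \<delta> \<Longrightarrow> \<bar>h y - h (D x)\<bar> < e"
proof -
  have "compact (D ` cball 0 R)"
    by (intro compact_continuous_image continuous_on_subset[OF assms(1)] compact_cball) auto
  then have "bounded (D ` cball 0 R)" by (rule compact_imp_bounded)
  then obtain C where "\<forall>y\<in>D ` cball 0 R. norm y \<le> C" unfolding bounded_iff by blast
  then have C: "\<And>x. norm x \<le> R \<Longrightarrow> \<bar>D x\<bar> \<le> C" by auto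
  have "uniformly_continuous_on (cball 0 (C + 1)) h"
    by (intro compact_uniformly_continuous continuous_on_subset[OF assms(2)]) auto
  then obtain \<delta> where \<delta>: "0 < \<delta>"
    "\<And>y y'. y \<in> cball 0 (C + 1) \<Longrightarrow> y' \<in> cball 0 (C + 1) \<Longrightarrow> dist y' y < \<delta> \<Longrightarrow> dist (h y') (h y) < e"
    unfolding uniformly_continuous_on_def using assms(3) by metis
  show ?thesis
  proof (rule that)
    show "0 < min \<delta> 1" using \<delta>(1) by simp
    fix x y assume "norm x \<le> R" "\<bar>y - D x\<bar> < min \<delta> 1"
    moreover have "\<bar>y\<bar> \<le> C + 1"
      using C[OF \<open>norm x \<le> R\<close>] abs_triangle_ineq2[of y "D x"] \<open>\<bar>y - D x\<bar> < min \<delta> 1\<close> by linarith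
    ultimately show "\<bar>h y - h (D x)\<bar> < e"
      using C[of x] \<delta>(2)[of "D x" y] by (simp add: dist_real_def)
  qed
qed

lemma abs_diff_le_tail_cutoff:
  fixes h :: "real \<Rightarrow> real"
  assumes "\<And>y. \<bar>h y\<bar> \<le> B" "0 \<le> e" "norm x \<le> R + 1 \<Longrightarrow> \<bar>h y - h z\<bar> < e"
  shows "\<bar>h y - h z\<bar> \<le> e + 2 * B * tail_cutoff R x"
proof (cases "norm x \<le> R + 1")
  case True
  have "0 \<le> B * tail_cutoff R x"
    using assms(1)[of y] tail_cutoff_bounds(1)[of R x] by simp
  with assms(3)[OF True] show ?thesis by linarith
next
  case False
  then show ?thesis
    using tail_cutoff_eq_1[of R x] assms(1)[of y] assms(1)[of z] abs_triangle_ineq4[of "h y" "h z"] assms(2)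
    by simp
qed

text \<open>Tightness of the limit G confines X n to a ball up to small probability, and on that
  ball h is uniformly continuous near the values of D.\<close>
lemma integral_diff_tendsto_zero_if_uniformly_close:
  fixes X :: "nat \<Rightarrow> 'w \<Rightarrow> 'a::euclidean_space" and G :: "'v \<Rightarrow> 'a"
    and Y :: "nat \<Rightarrow> 'w \<Rightarrow> real" and D :: "'a \<Rightarrow> real" and h :: "real \<Rightarrow> real"
  assumes M: "\<And>n. prob_space (M n)" and N: "prob_space N"
    and [measurable]: "\<And>n. X n \<in> borel_measurable (M n)" "G \<in> borel_measurable N"
      "\<And>n. Y n \<in> borel_measurable (M n)"
    and conv: "weak_conv_rv M X N G" and D: "continuous_on UNIV D"
    and close: "\<And>R \<epsilon>. 0 < \<epsilon> \<Longrightarrow>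
      \<forall>\<^sub>F n in sequentially. \<forall>\<omega>\<in>space (M n). norm (X n \<omega>) \<le> R \<longrightarrow> \<bar>Y n \<omega> - D (X n \<omega>)\<bar> < \<epsilon>"
    and h: "continuous_on UNIV h" and B: "0 < B" "\<And>y. \<bar>h y\<bar> \<le> B"
  shows "(\<lambda>n. (\<integral>\<omega>. h (Y n \<omega>) \<partial>M n) - (\<integral>\<omega>. h (D (X n \<omega>)) \<partial>M n)) \<longlonglongrightarrow> 0"
  unfolding tendsto_iff
proof (intro allI impI)
  fix e :: real assume "0 < e"
  have [measurable]: "h \<in> borel_measurable borel" "D \<in> borel_measurable borel"
    using h D by (simp_all add: borel_measurable_continuous_onI)
  obtain R where "prob_space.expectation N (\<lambda>\<omega>. tail_cutoff R (G \<omega>)) < e / (4 * B)"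
    using prob_space.expectation_tail_cutoff_small[OF N, of G "e / (4 * B)"] B(1) \<open>0 < e\<close> by auto
  moreover have "(\<lambda>n. \<integral>\<omega>. tail_cutoff R (X n \<omega>) \<partial>M n) \<longlonglongrightarrow> (\<integral>\<omega>. tail_cutoff R (G \<omega>) \<partial>N)"
    using conv continuous_on_tail_cutoff bounded_range_tail_cutoff unfolding weak_conv_rv_def by blast
  ultimately have tail: "\<forall>\<^sub>F n in sequentially. (\<integral>\<omega>. tail_cutoff R (X n \<omega>) \<partial>M n) < e / (4 * B)"
    by (simp add: order_tendstoD(2))
  obtain \<delta> where "0 < \<delta>" and \<delta>: "\<And>x y. norm x \<le> R + 1 \<Longrightarrow> \<bar>y - D x\<bar> < \<delta> \<Longrightarrow> \<bar>h y - h (D x)\<bar> < e / 4"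
    using uniformly_close_near_image[OF D h, of "e / 4"] \<open>0 < e\<close> by auto
  show "\<forall>\<^sub>F n in sequentially. dist ((\<integral>\<omega>. h (Y n \<omega>) \<partial>M n) - (\<integral>\<omega>. h (D (X n \<omega>)) \<partial>M n)) 0 < e"
    using tail close[OF \<open>0 < \<delta>\<close>, of "R + 1"]
  proof eventually_elim
    case (elim n)
    then have "\<bar>h (Y n \<omega>) - h (D (X n \<omega>))\<bar> \<le> e / 4 + 2 * B * tail_cutoff R (X n \<omega>)"
      if "\<omega> \<in> space (M n)" for \<omega>
      using that \<delta> \<open>0 < e\<close> by (intro abs_diff_le_tail_cutoff B(2)) auto
    then have "\<bar>(\<integral>\<omega>. h (Y n \<omega>) \<partial>M n) - (\<integral>\<omega>. h (D (X n \<omega>)) \<partial>M n)\<bar>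
      \<le> e / 4 + 2 * B * (\<integral>\<omega>. tail_cutoff R (X n \<omega>) \<partial>M n)"
      using B(2) by (intro prob_space.abs_expectation_diff_le[OF M, where B = B])
        (auto simp: abs_of_nonneg tail_cutoff_bounds)
    also have "\<dots> < e"
      using elim(1) B(1) \<open>0 < e\<close> by (simp add: field_simps)
    finally show ?case by (simp add: dist_real_def)
  qed
qed

theorem weak_conv_rv_if_uniformly_close:
  fixes X :: "nat \<Rightarrow> 'w \<Rightarrow> 'a::euclidean_space" and G :: "'v \<Rightarrow> 'a"
    and Y :: "nat \<Rightarrow> 'w \<Rightarrow> real" and D :: "'a \<Rightarrow> real"
  assumes "\<And>n. prob_space (M n)" "prob_space N"
    and "\<And>n. X n \<in> borel_measurable (M n)" "G \<in> borel_measurable N" "\<And>n. Y n \<in> borel_measurable (M n)"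
    and conv: "weak_conv_rv M X N G" and D: "continuous_on UNIV D"
    and "\<And>R \<epsilon>. 0 < \<epsilon> \<Longrightarrow>
      \<forall>\<^sub>F n in sequentially. \<forall>\<omega>\<in>space (M n). norm (X n \<omega>) \<le> R \<longrightarrow> \<bar>Y n \<omega> - D (X n \<omega>)\<bar> < \<epsilon>"
  shows "weak_conv_rv M Y N (\<lambda>\<omega>. D (G \<omega>))"
  unfolding weak_conv_rv_def
proof (intro allI impI, elim conjE)
  fix h :: "real \<Rightarrow> real" assume h: "continuous_on UNIV h" "bounded (range h)"
  then obtain B where "0 < B" "\<And>y. \<bar>h y\<bar> \<le> B" by (auto simp: bounded_pos)
  then have "(\<lambda>n. (\<integral>\<omega>. h (Y n \<omega>) \<partial>M n) - (\<integral>\<omega>. h (D (X n \<omega>)) \<partial>M n)) \<longlonglongrightarrow> 0"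
    using assms h(1) by (intro integral_diff_tendsto_zero_if_uniformly_close)
  moreover have "(\<lambda>n. \<integral>\<omega>. h (D (X n \<omega>)) \<partial>M n) \<longlonglongrightarrow> (\<integral>\<omega>. h (D (G \<omega>)) \<partial>N)"
    using weak_conv_rv_compose[OF conv D] h unfolding weak_conv_rv_def by blast
  ultimately show "(\<lambda>n. \<integral>\<omega>. h (Y n \<omega>) \<partial>M n) \<longlonglongrightarrow> (\<integral>\<omega>. h (D (G \<omega>)) \<partial>N)"
    using tendsto_add by fastforce
qed

theorem mainTheorem20:
  fixes \<alpha> \<beta> :: "real^'k::finite" and d :: "real^'k^'k"
    and M :: "nat \<Rightarrow> 'w measure" and N :: "'v measure"
    and \<alpha>n \<beta>n :: "nat \<Rightarrow> 'w \<Rightarrow> real^'k" and dn :: "nat \<Rightarrow> 'w \<Rightarrow> real^'k^'k"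
    and a :: "nat \<Rightarrow> real"
    and G\<alpha> G\<beta> :: "'v \<Rightarrow> real^'k" and Gd :: "'v \<Rightarrow> real^'k^'k"
  assumes "\<alpha> \<in> prob_simplex" and "\<beta> \<in> prob_simplex" and "\<forall>k l. 0 \<le> d$k$l"
    and "\<And>n. prob_space (M n)"
    and "\<And>n. \<alpha>n n \<in> borel_measurable (M n)" and "\<And>n. \<beta>n n \<in> borel_measurable (M n)"
    and "\<And>n. dn n \<in> borel_measurable (M n)"
    and "\<And>n \<omega>. \<omega> \<in> space (M n) \<Longrightarrow> \<alpha>n n \<omega> \<in> prob_simplex"
    and "\<And>n \<omega>. \<omega> \<in> space (M n) \<Longrightarrow> \<beta>n n \<omega> \<in> prob_simplex"
    and "\<And>n \<omega> k l. \<omega> \<in> space (M n) \<Longrightarrow> 0 \<le> dn n \<omega> $k$l"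
    and "\<And>n. 0 < a n" and "filterlim a at_top sequentially"
    and "prob_space N"
    and "G\<alpha> \<in> borel_measurable N" and "G\<beta> \<in> borel_measurable N" and "Gd \<in> borel_measurable N"
    and "weak_conv_rv M
           (\<lambda>n \<omega>. (a n *\<^sub>R (\<alpha>n n \<omega> - \<alpha>), a n *\<^sub>R (\<beta>n n \<omega> - \<beta>), a n *\<^sub>R (dn n \<omega> - d)))
           N (\<lambda>\<omega>. (G\<alpha> \<omega>, G\<beta> \<omega>, Gd \<omega>))"
  shows "weak_conv_rv M
           (\<lambda>n \<omega>. a n * (SW (\<alpha>n n \<omega>) (\<beta>n n \<omega>) (dn n \<omega>) - SW \<alpha> \<beta> d))
           N (\<lambda>\<omega>. Inf ((\<lambda>\<pi>. pairing \<pi> (Gd \<omega>)) ` opt_couplings \<alpha> \<beta> d)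
                  + Sup ((\<lambda>f. cctrans f d \<bullet> G\<alpha> \<omega> + ctrans f d \<bullet> G\<beta> \<omega>) ` dual_sols \<alpha> \<beta> d))"
proof -
  define \<theta> where "\<theta> = (\<alpha>, \<beta>, d)"
  define \<Theta> where "\<Theta> = (\<lambda>n \<omega>. (\<alpha>n n \<omega>, \<beta>n n \<omega>, dn n \<omega>))"
  have \<theta>: "\<theta> \<in> ot_domain" and \<Theta>: "\<And>n \<omega>. \<omega> \<in> space (M n) \<Longrightarrow> \<Theta> n \<omega> \<in> ot_domain"
    using assms(1-3,8-10) by (simp_all add: \<theta>_def \<Theta>_def)
  have [measurable]: "\<Theta> n \<in> borel_measurable (M n)" for n
    unfolding \<Theta>_def by (intro borel_measurable_Pair assms(5-7))
  have "weak_conv_rv M (\<lambda>n \<omega>. a n * (SW_data (\<Theta> n \<omega>) - SW_data \<theta>)) N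
      (\<lambda>\<omega>. SW_deriv \<theta> (G\<alpha> \<omega>, G\<beta> \<omega>, Gd \<omega>))"
  proof (rule weak_conv_rv_if_uniformly_close[OF assms(4,13), where X = "\<lambda>n \<omega>. a n *\<^sub>R (\<Theta> n \<omega> - \<theta>)"
        and G = "\<lambda>\<omega>. (G\<alpha> \<omega>, G\<beta> \<omega>, Gd \<omega>)" and D = "SW_deriv \<theta>"])
    show "weak_conv_rv M (\<lambda>n \<omega>. a n *\<^sub>R (\<Theta> n \<omega> - \<theta>)) N (\<lambda>\<omega>. (G\<alpha> \<omega>, G\<beta> \<omega>, Gd \<omega>))"
      using assms(17) by (simp add: \<theta>_def \<Theta>_def)
    show "(\<lambda>\<omega>. a n * (SW_data (\<Theta> n \<omega>) - SW_data \<theta>)) \<in> borel_measurable (M n)" for n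
      using borel_measurable_SW_data[of "\<Theta> n", OF _ \<Theta>] by measurable
    show "\<forall>\<^sub>F n in sequentially. \<forall>\<omega>\<in>space (M n). norm (a n *\<^sub>R (\<Theta> n \<omega> - \<theta>)) \<le> R \<longrightarrow>
      \<bar>a n * (SW_data (\<Theta> n \<omega>) - SW_data \<theta>) - SW_deriv \<theta> (a n *\<^sub>R (\<Theta> n \<omega> - \<theta>))\<bar> < \<epsilon>"
      if "0 < \<epsilon>" for R \<epsilon>
      using SW_quotient_uniform[OF \<theta> assms(11,12) that, of R] \<Theta> by (auto elim!: eventually_mono)
  qed (use \<theta> assms(14-16) in \<open>simp_all add: continuous_on_SW_deriv\<close>)
  then show ?thesis
    by (simp add: \<theta>_def \<Theta>_def SW_data_def SW_deriv_def dual_obj_def)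
qed

end
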